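(* Let $F=\mathrm{F}(1,\langle2\rangle,\mathbb Z[\tfrac12])$, $T=\mathrm{T}(1,\langle2\rangle,\mathbb Z[\tfrac12])$, $V=\mathrm{V}(1,\langle2\rangle,\mathbb Z[\tfrac12])$ (Thompson's groups). Let $x_0,x_1\in F$ be given by $$(t)x_0=\begin{cases}2t,&t\in[0,\tfrac14]\\ t+\tfrac14,&t\in[\tfrac14,\tfrac12]\\ \tfrac t2+\tfrac12,&t\in[\tfrac12,1)\end{cases}\qquad (t)x_1=\begin{cases}t,&t\in[0,\tfrac12]\\ 2t-\tfrac12,&t\in[\tfrac12,\tfrac58]\\ t+\tfrac18,&t\in[\tfrac58,\tfrac34]\\ \tfrac t2+\tfrac12,&t\in[\tfrac34,1)\end{cases}$$ and let $a=x_0^2$, $b=x_1x_0^{-1}x_1^{-1}x_0$ (product of right-acting maps). Then $\langle a,b\rangle=\langle b\rangle\wr\langle a\rangle\cong\mathbb Z\wr\mathbb Z$, and there is a single first-order formula in the group language with parameters from $F$ which defines the subgroup $\langle a,b\rangle$ in each of $F$, $T$ and $V$.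
   Context: $\mathrm{V}(r,\Lambda,A)$ is the group of bijections $x\colon[0,r)\to[0,r)$ that are piecewise affine with finitely many cuts and singular points, right-continuous everywhere, all slopes in $\Lambda$, all cut/singular points and their images in $A$; $\mathrm{F}(r,\Lambda,A)$ is its subgroup of elements continuous in the usual topology, $\mathrm{T}(r,\Lambda,A)$ its subgroup of elements continuous in the circle topology of $[0,r)\cong[0,r]/\{0,r\}$. Maps act on the right: $(t)(xy)=((t)x)y$. $\langle b\rangle\wr\langle a\rangle$ denotes the restricted wreath product: the conjugates $a^{-k}ba^k$ ($k\in\mathbb Z$) generate a free abelian group with basis $(a^{-k}ba^k)_k$, and $\langle a,b\rangle$ is its semidirect product with the infinite cyclic group $\langle a\rangle$. *)

theory Defs
  imports Complex_Main
begin

definition dyadic :: "real \<Rightarrow> bool" where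
  "dyadic x \<longleftrightarrow> (\<exists>m::int. \<exists>n::nat. x = of_int m / 2 ^ n)"

text \<open>Elements are maps real to real which are the identity outside [0,1).
  Maps act on the right: (t)(x y) = ((t)x)y, so the product x y is y o x.\<close>

definition gmul :: "(real \<Rightarrow> real) \<Rightarrow> (real \<Rightarrow> real) \<Rightarrow> (real \<Rightarrow> real)" where
  "gmul x y = y \<circ> x"

definition ginv :: "(real \<Rightarrow> real) \<Rightarrow> (real \<Rightarrow> real)" where
  "ginv x = inv x"

definition gpow :: "(real \<Rightarrow> real) \<Rightarrow> int \<Rightarrow> (real \<Rightarrow> real)" where
  "gpow x n = (if 0 \<le> n then (gmul x ^^ nat n) id else (gmul (ginv x) ^^ nat (- n)) id)"

inductive_set gen_by :: "(real \<Rightarrow> real) set \<Rightarrow> (real \<Rightarrow> real) set" for S where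
  gen_id: "id \<in> gen_by S"
| gen_base: "s \<in> S \<Longrightarrow> s \<in> gen_by S"
| gen_mul: "x \<in> gen_by S \<Longrightarrow> y \<in> gen_by S \<Longrightarrow> gmul x y \<in> gen_by S"
| gen_inv: "x \<in> gen_by S \<Longrightarrow> ginv x \<in> gen_by S"

definition thompsonV :: "(real \<Rightarrow> real) set" where
  "thompsonV = {f.
     (\<forall>t. t \<notin> {0..<1} \<longrightarrow> f t = t) \<and>
     bij_betw f {0..<1} {0..<1} \<and>
     (\<exists>ps :: real list. length ps \<ge> 2 \<and> sorted_wrt (<) ps \<and> hd ps = 0 \<and> last ps = 1 \<and>
        (\<forall>p \<in> set ps. dyadic p) \<and>
        (\<forall>i < length ps - 1. dyadic (f (ps ! i)) \<and>
            (\<exists>k::int. \<exists>c::real. \<forall>t \<in> {ps ! i ..< ps ! (i+1)}. f t = 2 powr (real_of_int k) * t + c)))}"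

definition thompsonF :: "(real \<Rightarrow> real) set" where
  "thompsonF = {f \<in> thompsonV. continuous_on {0..<1} f}"

text \<open>Continuity in the circle topology of [0,1) = [0,1]/{0,1} = R/Z: the induced
  map on the unit circle, pulled back along the quotient map t to exp(2 pi i t), is continuous.\<close>
definition thompsonT :: "(real \<Rightarrow> real) set" where
  "thompsonT = {f \<in> thompsonV. continuous_on UNIV (\<lambda>t. cis (2 * pi * f (frac t)))}"

definition x0 :: "real \<Rightarrow> real" where
  "x0 t = (if t < 0 \<or> 1 \<le> t then t
           else if t \<le> 1/4 then 2 * t
           else if t \<le> 1/2 then t + 1/4
           else t / 2 + 1/2)"

definition x1 :: "real \<Rightarrow> real" where
  "x1 t = (if t < 0 \<or> 1 \<le> t then t
           else if t \<le> 1/2 then t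
           else if t \<le> 5/8 then 2 * t - 1/2
           else if t \<le> 3/4 then t + 1/8
           else t / 2 + 1/2)"

definition ela :: "real \<Rightarrow> real" where
  "ela = gmul x0 x0"

definition elb :: "real \<Rightarrow> real" where
  "elb = gmul (gmul (gmul x1 (ginv x0)) (ginv x1)) x0"

definition bconj :: "int \<Rightarrow> real \<Rightarrow> real" where
  "bconj k = gmul (gmul (gpow ela (- k)) elb) (gpow ela k)"

definition bprod :: "int \<Rightarrow> (int \<Rightarrow> int) \<Rightarrow> real \<Rightarrow> real" where
  "bprod N n = foldr (\<lambda>k acc. gmul (gpow (bconj k) (n k)) acc) [- N..N] id"

datatype gterm = GVar nat | GPar nat | GOne | GMul gterm gterm | GInv gterm

datatype gform = GEq gterm gterm | GNot gform | GAnd gform gform | GEx nat gform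

fun evt :: "(nat \<Rightarrow> real \<Rightarrow> real) \<Rightarrow> (nat \<Rightarrow> real \<Rightarrow> real) \<Rightarrow> gterm \<Rightarrow> real \<Rightarrow> real" where
  "evt ps e (GVar i) = e i"
| "evt ps e (GPar i) = ps i"
| "evt ps e GOne = id"
| "evt ps e (GMul s t) = gmul (evt ps e s) (evt ps e t)"
| "evt ps e (GInv s) = ginv (evt ps e s)"

fun sat :: "(real \<Rightarrow> real) set \<Rightarrow> (nat \<Rightarrow> real \<Rightarrow> real) \<Rightarrow> (nat \<Rightarrow> real \<Rightarrow> real) \<Rightarrow> gform \<Rightarrow> bool" where
  "sat G ps e (GEq s t) = (evt ps e s = evt ps e t)"
| "sat G ps e (GNot \<phi>) = (\<not> sat G ps e \<phi>)"
| "sat G ps e (GAnd \<phi> \<psi>) = (sat G ps e \<phi> \<and> sat G ps e \<psi>)"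
| "sat G ps e (GEx v \<phi>) = (\<exists>g \<in> G. sat G ps (e(v := g)) \<phi>)"

end

theory Submission
  imports Defs
begin

(* Everything is made concrete by one partition of (0,1) into the dyadic intervals
   piece i = [pstart i, pstart (i+1)), i in Z, accumulating at 0 and at 1: x0 maps piece i
   affinely onto piece (i+1), so a^k = apow k shifts pieces by 2k.  The element b is supported
   on supp 0 = (1/2, 7/8), which is the union of two consecutive pieces, and its conjugates
   a^(-k) b a^k are supported on the disjoint intervals supp k = apow k ` supp 0.  Hence the
   conjugates commute, and every element of <a,b> has the normal form  bvec n o apow m  with
   n finitely supported; this yields the wreath-product structure.

   For definability, the formula says: "there is u commuting with a such that, for all v
   commuting with a, u^(-2) g commutes with v^(-2) b v^2".  In any G between F and V the
   centraliser of a is exactly the group of powers of x0 (an element commuting with a is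
   determined by its linear germ at 0), so the formula says that some a^(-m) g commutes with
   every conjugate of b.  Such a map agrees with a power of the respective conjugate on each
   supp k (its germ at the left end point of supp k is linear and commutes with b), and it is
   the identity near 0 and near 1 (it is affine there and fixes infinitely many points
   accumulating at 0 resp. 1).  So it lies in the base group, i.e. g is in <a,b>. *)

definition pow2 :: "int \<Rightarrow> real" where "pow2 i = 2 powr (real_of_int i)"

lemma pow2_pos[simp]: "0 < pow2 i" by (simp add: pow2_def)
lemma pow2_nonneg[simp]: "0 \<le> pow2 i" by (simp add: pow2_def)
lemma pow2_ne0[simp]: "pow2 i \<noteq> 0" by (simp add: pow2_def)
lemma pow2_add: "pow2 (i + j) = pow2 i * pow2 j" by (simp add: pow2_def powr_add)
lemma pow2_0[simp]: "pow2 0 = 1" by (simp add: pow2_def)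
lemma pow2_1[simp]: "pow2 1 = 2" by (simp add: pow2_def)
lemma pow2_minus: "pow2 (- i) = 1 / pow2 i" by (simp add: pow2_def powr_minus divide_inverse)
lemma pow2_diff: "pow2 (i - j) = pow2 i / pow2 j" using pow2_add[of i "-j"] pow2_minus[of j] by simp
lemma pow2_Suc: "pow2 (i + 1) = 2 * pow2 i" by (simp add: pow2_add)
lemma pow2_pred: "pow2 (i - 1) = pow2 i / 2" by (simp add: pow2_diff)
lemma pow2_nat: "pow2 (int n) = 2 ^ n" by (simp add: pow2_def powr_realpow)
lemma pow2_less_iff[simp]: "pow2 i < pow2 j \<longleftrightarrow> i < j" by (simp add: pow2_def)
lemma pow2_le_iff[simp]: "pow2 i \<le> pow2 j \<longleftrightarrow> i \<le> j" by (simp add: pow2_def)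
lemma pow2_inj[simp]: "pow2 i = pow2 j \<longleftrightarrow> i = j" by (metis order.antisym order_refl pow2_le_iff)
lemma pow2_lt1_iff[simp]: "pow2 i < 1 \<longleftrightarrow> i < 0" using pow2_less_iff[of i 0] by simp
lemma pow2_le1_iff[simp]: "pow2 i \<le> 1 \<longleftrightarrow> i \<le> 0" using pow2_le_iff[of i 0] by simp
lemma pow2_eq1[simp]: "pow2 i = 1 \<longleftrightarrow> i = 0" using pow2_inj[of i 0] by simp
lemma pow2_neg_nat: "pow2 (- int n) = 1 / 2 ^ n" by (simp add: pow2_minus pow2_nat)
lemma pow2_neg_Suc: "pow2 (- int (Suc k)) = pow2 (- int k) / 2"
proof -
  have "- int (Suc k) = - int k - 1" by simp
  thus ?thesis by (simp only: pow2_pred)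
qed
lemma pow2_num[simp]: "pow2 2 = 4" "pow2 (-1) = 1/2" "pow2 (-2) = 1/4" "pow2 (-3) = 1/8"
  using pow2_nat[of 2] pow2_neg_nat[of 1] pow2_neg_nat[of 2] pow2_neg_nat[of 3] by simp_all

lemma pow2_small: assumes "0 < d" shows "\<exists>n::nat. pow2 (- int n) < d"
proof -
  obtain n where "(1/2::real)^n < d" using real_arch_pow_inv[OF assms, of "1/2"] by auto
  thus ?thesis by (auto simp: pow2_neg_nat power_one_over)
qed

lemma pow2_small_int: assumes "0 < d" shows "\<exists>K::int. \<forall>i\<le>K. pow2 i < d"
proof -
  obtain n::nat where "pow2 (- int n) < d" using pow2_small[OF assms] by auto
  thus ?thesis by (intro exI[of _ "- int n"]) (auto intro: le_less_trans[rotated])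
qed

lemma dyadic_int[simp]: "dyadic (of_int m)"
  unfolding dyadic_def by (rule exI[of _ m], rule exI[of _ 0]) simp
lemma dyadic_0[simp]: "dyadic 0" using dyadic_int[of 0] by simp
lemma dyadic_1[simp]: "dyadic 1" using dyadic_int[of 1] by simp
lemma dyadic_frac[simp]: "dyadic (of_int m / 2 ^ n)" unfolding dyadic_def by blast

lemma dyadic_add: assumes "dyadic x" "dyadic y" shows "dyadic (x + y)"
proof -
  obtain m n m' n' where x: "x = of_int m / 2 ^ n" and y: "y = of_int m' / 2 ^ n'"
    using assms unfolding dyadic_def by blast
  have "x + y = of_int (m * 2 ^ n' + m' * 2 ^ n) / 2 ^ (n + n')"
    by (simp add: x y field_simps power_add)
  thus ?thesis unfolding dyadic_def by blast
qed

lemma dyadic_uminus: assumes "dyadic x" shows "dyadic (- x)"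
proof -
  obtain m n where x: "x = of_int m / 2 ^ n" using assms unfolding dyadic_def by blast
  have "- x = of_int (- m) / 2 ^ n" by (simp add: x)
  thus ?thesis unfolding dyadic_def by blast
qed

lemma dyadic_diff: "dyadic x \<Longrightarrow> dyadic y \<Longrightarrow> dyadic (x - y)"
  using dyadic_add[of x "-y"] dyadic_uminus[of y] by simp

lemma dyadic_pow2[simp]: "dyadic (pow2 i)"
proof (cases "0 \<le> i")
  case True
  then obtain n where "i = int n" by (metis nonneg_eq_int)
  thus ?thesis using dyadic_int[of "2^n"] by (simp add: pow2_nat)
next
  case False
  then obtain n where "i = - int n" by (intro that[of "nat (-i)"]) simp
  thus ?thesis unfolding dyadic_def by (auto simp: pow2_neg_nat intro!: exI[of _ 1] exI[of _ n])
qed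

lemma dyadic_consts[simp]: "dyadic (1/2)" "dyadic (5/8)" "dyadic (3/4)" "dyadic (7/8)"
  using dyadic_frac[of 1 1] dyadic_frac[of 5 3] dyadic_frac[of 3 2] dyadic_frac[of 7 3]
  by simp_all

lemma gmul_pow_id: "(gmul x ^^ k) id = x ^^ k"
proof (induction k)
  case 0 thus ?case by simp
next
  case (Suc k)
  have "(gmul x ^^ Suc k) id = gmul x ((gmul x ^^ k) id)" by simp
  also have "\<dots> = x ^^ k \<circ> x" using Suc by (simp only: gmul_def[of x "x ^^ k"])
  also have "\<dots> = x ^^ Suc k" by (simp only: funpow_Suc_right)
  finally show ?case .
qed

lemma gpow_alt: "gpow x n = (if 0 \<le> n then x ^^ nat n else inv x ^^ nat (- n))"
  by (simp add: gpow_def gmul_pow_id ginv_def)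

lemma gpow_0[simp]: "gpow x 0 = id" by (simp add: gpow_alt)
lemma gpow_1[simp]: "gpow x 1 = x" by (simp add: gpow_alt)
lemma gpow_m1[simp]: "gpow x (-1) = inv x" by (simp add: gpow_alt)

lemma bij_comp_inv: "bij x \<Longrightarrow> x \<circ> inv x = id" by (rule ext) (simp add: bij_is_surj surj_f_inv_f)
lemma bij_inv_comp: "bij x \<Longrightarrow> inv x \<circ> x = id" by (rule ext) (simp add: bij_is_inj)
lemma bij_comp_inv_pt: "bij x \<Longrightarrow> x (inv x t) = t" by (simp add: bij_is_surj surj_f_inv_f)
lemma bij_inv_comp_pt: "bij x \<Longrightarrow> inv x (x t) = t" by (simp add: bij_is_inj)

lemma gpow_Suc: assumes "bij x" shows "gpow x (n + 1) = x \<circ> gpow x n"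
proof (cases "0 \<le> n")
  case True
  hence "nat (n+1) = Suc (nat n)" by simp
  thus ?thesis using True by (simp add: gpow_alt)
next
  case False
  show ?thesis
  proof (cases "n = -1")
    case True thus ?thesis using bij_comp_inv[OF assms] by simp
  next
    case F2: False
    with False have "nat (-n) = Suc (nat (-(n+1)))" by simp
    hence "inv x ^^ nat (-n) = inv x \<circ> inv x ^^ nat (-(n+1))" by simp
    hence "x \<circ> inv x ^^ nat (-n) = inv x ^^ nat (-(n+1))"
      using bij_comp_inv_pt[OF assms] by (simp add: fun_eq_iff)
    thus ?thesis using False F2 by (simp add: gpow_alt)
  qed
qed

lemma gpow_pred: assumes "bij x" shows "gpow x (n - 1) = inv x \<circ> gpow x n"
proof -
  have "gpow x n = x \<circ> gpow x (n - 1)" using gpow_Suc[OF assms, of "n-1"] by simp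
  hence "inv x \<circ> gpow x n = (inv x \<circ> x) \<circ> gpow x (n - 1)" by (simp add: comp_assoc)
  thus ?thesis using bij_inv_comp[OF assms] by simp
qed

lemma gpow_add: assumes "bij x" shows "gpow x (m + n) = gpow x m \<circ> gpow x n"
proof (induction m rule: int_induct[where k=0])
  case base thus ?case by simp
next
  case (step1 i)
  have "gpow x (i + 1 + n) = x \<circ> gpow x (i + n)" using gpow_Suc[OF assms, of "i+n"] by (simp add: ac_simps)
  thus ?case using step1 gpow_Suc[OF assms, of i] by (simp add: comp_assoc)
next
  case (step2 i)
  have "gpow x (i - 1 + n) = inv x \<circ> gpow x (i + n)" using gpow_pred[OF assms, of "i+n"] by (simp add: algebra_simps)
  thus ?case using step2 gpow_pred[OF assms, of i] by (simp add: comp_assoc)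
qed

lemma gpow_comm: "bij x \<Longrightarrow> gpow x m \<circ> gpow x n = gpow x n \<circ> gpow x m"
  by (metis add.commute gpow_add)

lemma gpow_inverse: assumes "bij x" shows "gpow x n \<circ> gpow x (- n) = id" "gpow x (- n) \<circ> gpow x n = id"
  using gpow_add[OF assms, of n "-n"] gpow_add[OF assms, of "-n" n] by simp_all

lemma gpow_bij: assumes "bij x" shows "bij (gpow x n)"
  using gpow_inverse[OF assms, of n] by (metis bij_comp comp_eq_id_dest o_bij)

lemma gpow_inv: "bij x \<Longrightarrow> inv (gpow x n) = gpow x (- n)"
  using gpow_inverse inv_unique_comp by blast

lemma gpow_fix: assumes "bij x" "x t = t" shows "gpow x n t = t"
proof -
  have "inv x t = t" using assms by (metis bij_inv_comp_pt)
  have "(x ^^ k) t = t" for k by (induction k) (use assms in auto)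
  moreover have "(inv x ^^ k) t = t" for k by (induction k) (use \<open>inv x t = t\<close> in auto)
  ultimately show ?thesis by (simp add: gpow_alt)
qed

lemma gpow_commute: assumes "bij x" "g \<circ> x = x \<circ> g" shows "g \<circ> gpow x n = gpow x n \<circ> g"
proof (induction n rule: int_induct[where k=0])
  case base thus ?case by simp
next
  case (step1 i)
  have "g \<circ> (x \<circ> gpow x i) = (g \<circ> x) \<circ> gpow x i" by (simp add: comp_assoc)
  also have "\<dots> = x \<circ> (g \<circ> gpow x i)" using assms(2) by (simp add: comp_assoc)
  also have "\<dots> = (x \<circ> gpow x i) \<circ> g" by (simp only: step1 comp_assoc)
  finally show ?case unfolding gpow_Suc[OF assms(1)] .
next
  case (step2 i)
  have "g (inv x t) = inv x (g t)" for t
  proof -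
    have "x (g (inv x t)) = g t"
      using fun_cong[OF assms(2), of "inv x t"] bij_comp_inv_pt[OF assms(1)] by simp
    hence "inv x (x (g (inv x t))) = inv x (g t)" by simp
    thus ?thesis using bij_inv_comp_pt[OF assms(1)] by simp
  qed
  hence gi: "g \<circ> inv x = inv x \<circ> g" by auto
  have "g \<circ> (inv x \<circ> gpow x i) = (g \<circ> inv x) \<circ> gpow x i" by (simp add: comp_assoc)
  also have "\<dots> = inv x \<circ> (g \<circ> gpow x i)" using gi by (simp add: comp_assoc)
  also have "\<dots> = (inv x \<circ> gpow x i) \<circ> g" by (simp only: step2 comp_assoc)
  finally show ?case unfolding gpow_pred[OF assms(1)] .
qed

lemma gpow_sq: assumes "bij x" shows "gpow (x \<circ> x) n = gpow x (2 * n)"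
proof (induction n rule: int_induct[where k=0])
  case base thus ?case by simp
next
  case (step1 i)
  have b: "bij (x \<circ> x)" using assms bij_comp by blast
  have e: "2 * (i+1) = 1 + (1 + 2*i)" by simp
  have "gpow x (2 * (i+1)) = gpow x 1 \<circ> gpow x 1 \<circ> gpow x (2*i)"
    unfolding e gpow_add[OF assms] by (simp add: comp_assoc)
  thus ?case using step1 gpow_Suc[OF b, of i] by (simp only: gpow_1 comp_assoc)
next
  case (step2 i)
  have b: "bij (x \<circ> x)" using assms bij_comp by blast
  have "inv (x \<circ> x) = inv x \<circ> inv x" using assms by (simp add: bij_is_inj bij_is_surj o_inv_distrib)
  moreover have e: "2 * (i-1) = -1 + (-1 + 2*i)" by simp
  have "gpow x (2 * (i-1)) = gpow x (-1) \<circ> gpow x (-1) \<circ> gpow x (2*i)"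
    unfolding e gpow_add[OF assms] by (simp add: comp_assoc)
  ultimately show ?case using step2 gpow_pred[OF b, of i] gpow_m1 by (simp only: comp_assoc)
qed

lemma gpow_conj: assumes "bij x" "bij h"
  shows "gpow (h \<circ> x \<circ> inv h) n = h \<circ> gpow x n \<circ> inv h"
proof (induction n rule: int_induct[where k=0])
  case base thus ?case using bij_comp_inv[OF assms(2)] by simp
next
  case (step1 i)
  have b: "bij (h \<circ> x \<circ> inv h)" using assms by (simp add: bij_comp bij_imp_bij_inv)
  have "h \<circ> x \<circ> inv h \<circ> (h \<circ> gpow x i \<circ> inv h) = h \<circ> (x \<circ> gpow x i) \<circ> inv h"
    using bij_inv_comp_pt[OF assms(2)] by (simp add: fun_eq_iff)
  thus ?case using step1 gpow_Suc[OF b, of i] gpow_Suc[OF assms(1), of i] by (simp only:)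
next
  case (step2 i)
  have b: "bij (h \<circ> x \<circ> inv h)" using assms by (simp add: bij_comp bij_imp_bij_inv)
  have "inv (h \<circ> x \<circ> inv h) = h \<circ> inv x \<circ> inv h"
    by (rule inv_unique_comp) (simp_all add: fun_eq_iff bij_comp_inv_pt bij_inv_comp_pt assms)
  moreover have "h \<circ> inv x \<circ> inv h \<circ> (h \<circ> gpow x i \<circ> inv h) = h \<circ> (inv x \<circ> gpow x i) \<circ> inv h"
    using bij_inv_comp_pt[OF assms(2)] by (simp add: fun_eq_iff)
  ultimately show ?case using step2 gpow_pred[OF b, of i] gpow_pred[OF assms(1), of i] by (simp only:)
qed

lemma gpow_gen: assumes "x \<in> gen_by S" shows "gpow x m \<in> gen_by S"
proof -
  have "(gmul y ^^ k) id \<in> gen_by S" if y: "y \<in> gen_by S" for k y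
  proof (induction k)
    case 0 show ?case by (simp only: funpow_0) (rule gen_id)
  next
    case (Suc k)
    have "(gmul y ^^ Suc k) id = gmul y ((gmul y ^^ k) id)" by (simp only: funpow.simps comp_apply)
    thus ?case using gen_mul[OF y Suc] by simp
  qed
  hence "(gmul x ^^ k) id \<in> gen_by S" "(gmul (ginv x) ^^ k) id \<in> gen_by S" for k
    using assms gen_inv[OF assms] by blast+
  thus ?thesis by (simp add: gpow_def)
qed

text \<open>rslope f p k: immediately to the right of p, f is affine with slope 2^k.  Elements of V
  have such a germ at every point, and germs compose; this is the main tool for identifying
  centralisers.\<close>
definition rslope :: "(real \<Rightarrow> real) \<Rightarrow> real \<Rightarrow> int \<Rightarrow> bool" where
  "rslope f p k \<longleftrightarrow> (\<exists>e>0. \<forall>s. 0 \<le> s \<and> s < e \<longrightarrow> f (p + s) = f p + pow2 k * s)"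

lemma rslope_comp: assumes "rslope f p k1" "rslope g (f p) k2" shows "rslope (\<lambda>t. g (f t)) p (k1 + k2)"
proof -
  obtain e1 where e1: "e1 > 0" "\<forall>s. 0 \<le> s \<and> s < e1 \<longrightarrow> f (p + s) = f p + pow2 k1 * s"
    using assms(1) unfolding rslope_def by blast
  obtain e2 where e2: "e2 > 0" "\<forall>s. 0 \<le> s \<and> s < e2 \<longrightarrow> g (f p + s) = g (f p) + pow2 k2 * s"
    using assms(2) unfolding rslope_def by blast
  define e where "e = min e1 (e2 / pow2 k1)"
  have "e > 0" using e1 e2 by (simp add: e_def)
  moreover have "g (f (p + s)) = g (f p) + pow2 (k1 + k2) * s" if "0 \<le> s" "s < e" for s
  proof -
    have "f (p + s) = f p + pow2 k1 * s" using e1 that by (simp add: e_def)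
    moreover have "pow2 k1 * s < e2" using that by (simp add: e_def pos_less_divide_eq mult.commute)
    hence "g (f p + pow2 k1 * s) = g (f p) + pow2 k2 * (pow2 k1 * s)" using e2 that by simp
    ultimately show ?thesis by (simp add: pow2_add)
  qed
  ultimately show ?thesis unfolding rslope_def by (metis add.right_neutral)
qed

lemma V_out: "f \<in> thompsonV \<Longrightarrow> t \<notin> {0..<1} \<Longrightarrow> f t = t"
  unfolding thompsonV_def by blast

lemma V_01: "f \<in> thompsonV \<Longrightarrow> t \<in> {0..<1} \<Longrightarrow> f t \<in> {0..<1}"
  unfolding thompsonV_def using bij_betwE by blast

lemma find_piece:
  fixes p :: real
  shows "xs \<noteq> [] \<Longrightarrow> hd xs \<le> p \<Longrightarrow> p < last xs \<Longrightarrow> \<exists>i < length xs - 1. xs ! i \<le> p \<and> p < xs ! (i + 1)"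
proof (induction xs)
  case Nil thus ?case by simp
next
  case (Cons x ys)
  have "ys \<noteq> []" using Cons by auto
  show ?case
  proof (cases "p < hd ys")
    case True
    thus ?thesis using Cons \<open>ys \<noteq> []\<close> by (intro exI[of _ 0]) (auto simp: hd_conv_nth)
  next
    case False
    then obtain i where "i < length ys - 1" "ys ! i \<le> p" "p < ys ! (i + 1)"
      using Cons \<open>ys \<noteq> []\<close> by auto
    thus ?thesis by (intro exI[of _ "Suc i"]) auto
  qed
qed

lemma V_rslope: assumes "f \<in> thompsonV" shows "\<exists>k. rslope f p k"
proof (cases "p \<in> {0..<1}")
  case False
  define e :: real where "e = (if p < 0 then - p else 1)"
  have "0 < e" using False by (simp add: e_def)
  moreover have "f (p + s) = f p + pow2 0 * s" if "0 \<le> s" "s < e" for s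
  proof -
    have "p + s \<notin> {0..<1}"
    proof (cases "p < 0")
      case True thus ?thesis using that by (simp add: e_def)
    next
      case False thus ?thesis using \<open>p \<notin> {0..<1}\<close> that by simp
    qed
    thus ?thesis using V_out[OF assms] \<open>p \<notin> {0..<1}\<close> by simp
  qed
  ultimately show ?thesis unfolding rslope_def by blast
next
  case True
  obtain ps :: "real list" where ps: "length ps \<ge> 2" "hd ps = 0" "last ps = 1"
    "\<forall>i < length ps - 1. (\<exists>k::int. \<exists>c::real. \<forall>t \<in> {ps ! i ..< ps ! (i+1)}. f t = 2 powr (real_of_int k) * t + c)"
    using assms unfolding thompsonV_def by blast
  have "ps \<noteq> []" using ps(1) by auto
  then obtain i where i: "i < length ps - 1" "ps ! i \<le> p" "p < ps ! (i + 1)"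
    using find_piece[of ps p] ps True by auto
  obtain k c where kc: "\<forall>t \<in> {ps ! i ..< ps ! (i+1)}. f t = pow2 k * t + c"
    using ps(4) i(1) unfolding pow2_def by blast
  have "f (p + s) = f p + pow2 k * s" if "0 \<le> s" "s < ps ! (i+1) - p" for s
    using kc i that by (auto simp: algebra_simps)
  thus ?thesis unfolding rslope_def using i by (intro exI[of _ k] exI[of _ "ps ! (i+1) - p"]) auto
qed

lemma V_affine_near1: assumes "f \<in> thompsonV" shows "\<exists>q<1. \<exists>l c. \<forall>t. q \<le> t \<and> t < 1 \<longrightarrow> f t = l * t + c"
proof -
  obtain ps :: "real list" where ps: "length ps \<ge> 2" "sorted_wrt (<) ps" "last ps = 1"
    "\<forall>i < length ps - 1. (\<exists>k::int. \<exists>c::real. \<forall>t \<in> {ps ! i ..< ps ! (i+1)}. f t = 2 powr (real_of_int k) * t + c)"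
    using assms unfolding thompsonV_def by blast
  define i where "i = length ps - 2"
  have i: "i < length ps - 1" "i + 1 = length ps - 1" using ps(1) by (auto simp: i_def)
  have "ps \<noteq> []" using ps(1) by auto
  hence "ps ! (i + 1) = 1" using ps(3) i(2) by (simp add: last_conv_nth)
  moreover have "ps ! i < ps ! (i + 1)" using ps(2) i by (simp add: sorted_wrt_nth_less)
  moreover obtain k c where "\<forall>t \<in> {ps ! i ..< ps ! (i+1)}. f t = 2 powr (real_of_int k) * t + c"
    using ps(4) i by blast
  ultimately show ?thesis by (intro exI[of _ "ps ! i"]) auto
qed

lemma continuous_on_eq: "continuous_on S f \<Longrightarrow> (\<And>x. x \<in> S \<Longrightarrow> f x = g x) \<Longrightarrow> continuous_on S g"
  using continuous_on_cong[of S S f g] by blast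

lemma frac_add_int: "0 \<le> y \<Longrightarrow> y < 1 \<Longrightarrow> frac (of_int k + y) = y"
proof -
  assume "0 \<le> y" "y < 1"
  hence "\<lfloor>of_int k + y\<rfloor> = k" by (intro floor_unique) auto
  thus ?thesis by (simp add: frac_def)
qed

lemma periodic_cont:
  fixes \<phi> :: "real \<Rightarrow> real"
  assumes c: "continuous_on {0..1} \<phi>" and e: "\<phi> 0 = \<phi> 1"
  shows "continuous_on UNIV (\<lambda>t. \<phi> (frac t))"
proof -
  have unit: "continuous_on {of_int n .. of_int n + 1} (\<lambda>t. \<phi> (frac t))" for n :: int
  proof -
    have "continuous_on {of_int n .. of_int n + 1} (\<lambda>t. \<phi> (t - of_int n))"
      by (rule continuous_on_compose2[OF c]) (auto intro!: continuous_intros)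
    moreover have "\<phi> (t - of_int n) = \<phi> (frac t)" if "t \<in> {of_int n .. of_int n + 1}" for t
    proof (cases "t = of_int n + 1")
      case True thus ?thesis using e by simp
    next
      case False
      hence "\<lfloor>t\<rfloor> = n" using that by (intro floor_unique) auto
      thus ?thesis by (simp add: frac_def)
    qed
    ultimately show ?thesis by (rule continuous_on_eq) auto
  qed
  have loc: "continuous_on {of_int n - 1 <..< of_int n + 1} (\<lambda>t. \<phi> (frac t))" for n :: int
  proof -
    have "continuous_on {of_int (n - 1) .. of_int (n - 1) + 1} (\<lambda>t. \<phi> (frac t))" by (rule unit)
    hence left: "continuous_on {of_int n - 1 .. of_int n} (\<lambda>t. \<phi> (frac t))" by simp
    have "continuous_on ({of_int n - 1 .. of_int n} \<union> {of_int n .. of_int n + 1}) (\<lambda>t. \<phi> (frac t))"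
      by (rule continuous_on_closed_Un[OF _ _ left unit]) auto
    thus ?thesis by (rule continuous_on_subset) auto
  qed
  have "UNIV = (\<Union>n\<in>(UNIV::int set). {of_int n - 1 <..< of_int n + 1::real})"
  proof (safe)
    fix t :: real
    show "t \<in> (\<Union>n. {of_int n - 1 <..< of_int n + 1})"
      by (rule UN_I[of "\<lfloor>t\<rfloor>"]) (auto, linarith+)
  qed auto
  moreover have "continuous_on (\<Union>n\<in>(UNIV::int set). {of_int n - 1 <..< of_int n + 1::real}) (\<lambda>t. \<phi> (frac t))"
    by (rule continuous_on_open_UN) (auto intro: loc)
  ultimately show ?thesis by simp
qed

text \<open>circle_lift L f: L is a continuous lift to R of the circle map induced by f.  Having such
  a lift is the circle continuity required in the definition of T, and lifts compose.\<close>
definition circle_lift :: "(real \<Rightarrow> real) \<Rightarrow> (real \<Rightarrow> real) \<Rightarrow> bool" where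
  "circle_lift L f \<longleftrightarrow> continuous_on UNIV L \<and> (\<forall>t. frac (L t) = f (frac t))"

lemma circle_lift_comp:
  assumes "circle_lift L1 f1" "circle_lift L2 f2" shows "circle_lift (L2 \<circ> L1) (f2 \<circ> f1)"
proof -
  have "continuous_on UNIV (L2 \<circ> L1)"
    by (rule continuous_on_compose) (use assms in \<open>auto simp: circle_lift_def intro: continuous_on_subset\<close>)
  thus ?thesis using assms by (simp add: circle_lift_def)
qed

lemma circle_lift_funpow: "circle_lift L f \<Longrightarrow> circle_lift (L ^^ n) (f ^^ n)"
proof (induction n)
  case 0 thus ?case by (simp add: circle_lift_def continuous_on_id)
next
  case (Suc n)
  thus ?case using circle_lift_comp[of L f "L ^^ n" "f ^^ n"] by (simp only: funpow_Suc_right)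
qed

lemma circle_lift_continuous:
  assumes "circle_lift L f" shows "continuous_on UNIV (\<lambda>t. cis (2 * pi * f (frac t)))"
proof -
  have "cis (2 * pi * f (frac t)) = cis (2 * pi * L t)" for t
  proof -
    have "f (frac t) = L t - of_int \<lfloor>L t\<rfloor>" using assms unfolding circle_lift_def frac_def by metis
    hence "2 * pi * f (frac t) = 2 * pi * L t - 2 * pi * of_int \<lfloor>L t\<rfloor>" by (simp add: right_diff_distrib)
    moreover have "cis (2 * pi * of_int \<lfloor>L t\<rfloor>) = 1" by simp
    ultimately show ?thesis by (simp add: cis_divide[symmetric])
  qed
  moreover have "continuous_on UNIV (\<lambda>t. cis (2 * pi * L t))"
    using assms unfolding circle_lift_def by (intro continuous_intros) auto
  ultimately show ?thesis by simp
qed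

section \<open>The partition of (0,1) on which x0 acts as a shift\<close>

text \<open>piece i = [pstart i, pstart (i+1)) has length 2^(pexp i): the pieces are
  ..., [1/8,1/4), [1/4,1/2) for i <= 0, then [1/2,3/4), [3/4,7/8), ... for i >= 1.
  pmap i j is the increasing affine bijection from piece i onto piece j.\<close>
definition pstart :: "int \<Rightarrow> real" where "pstart i = (if i \<le> 1 then pow2 (i - 2) else 1 - pow2 (- i))"
definition pexp :: "int \<Rightarrow> int" where "pexp i = (if i \<le> 0 then i - 2 else - i - 1)"
definition pmap :: "int \<Rightarrow> int \<Rightarrow> real \<Rightarrow> real" where "pmap i j t = pstart j + (t - pstart i) * pow2 (pexp j - pexp i)"
definition piece :: "int \<Rightarrow> real set" where "piece i = {pstart i ..< pstart (i+1)}"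

lemma pstart_low: "i \<le> 1 \<Longrightarrow> pstart i = pow2 (i - 2)" by (simp add: pstart_def)
lemma pstart_high: "1 \<le> i \<Longrightarrow> pstart i = 1 - pow2 (- i)"
  by (cases "i = 1") (auto simp: pstart_def)

lemma pstart_Suc: "pstart (i + 1) = pstart i + pow2 (pexp i)"
proof -
  consider "i \<le> 0" | "i = 1" | "i \<ge> 2" by linarith
  thus ?thesis
  proof cases
    case 1
    have "pow2 (i - 1) = 2 * pow2 (i - 2)" using pow2_Suc[of "i-2"] by simp
    thus ?thesis using 1 by (simp add: pstart_def pexp_def)
  next
    case 2 thus ?thesis by (simp add: pstart_def pexp_def)
  next
    case 3
    have "pow2 (- i) = 2 * pow2 (- i - 1)" using pow2_Suc[of "-i-1"] by simp
    thus ?thesis using 3 by (simp add: pstart_def pexp_def)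
  qed
qed

lemma pstart_pos: "0 < pstart i"
proof (cases "i \<le> 1")
  case False
  hence "pow2 (- i) < pow2 0" by simp
  thus ?thesis using False by (simp add: pstart_def)
qed (simp add: pstart_def)

lemma pstart_lt1: "pstart i < 1"
proof (cases "i \<le> 1")
  case True
  hence "pow2 (i - 2) < pow2 0" by simp
  thus ?thesis using True by (simp add: pstart_def)
qed (simp add: pstart_def)

lemma pstart_lt_Suc: "pstart i < pstart (i + 1)" by (simp add: pstart_Suc)

lemma pstart_mono_nat: "pstart i < pstart (i + 1 + int d)"
proof (induction d)
  case 0 thus ?case using pstart_lt_Suc by simp
next
  case (Suc d)
  have "pstart (i + 1 + int d) < pstart (i + 1 + int d + 1)" by (rule pstart_lt_Suc)
  thus ?case using Suc by (simp add: add.assoc)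
qed

lemma pstart_mono: "i < j \<Longrightarrow> pstart i < pstart j"
  using pstart_mono_nat[of i "nat (j - i - 1)"] by simp

lemma pstart_less_iff[simp]: "pstart i < pstart j \<longleftrightarrow> i < j"
proof
  assume a: "pstart i < pstart j"
  show "i < j"
  proof (rule ccontr)
    assume "\<not> i < j"
    hence "j < i \<or> j = i" by linarith
    thus False using pstart_mono[of j i] a by auto
  qed
qed (rule pstart_mono)
lemma pstart_le_iff[simp]: "pstart i \<le> pstart j \<longleftrightarrow> i \<le> j"
  using pstart_less_iff[of j i] by linarith
lemma pstart_eq_iff[simp]: "pstart i = pstart j \<longleftrightarrow> i = j"
  using pstart_le_iff[of i j] pstart_le_iff[of j i] by linarith

lemma piece_unique: "t \<in> piece i \<Longrightarrow> t \<in> piece j \<Longrightarrow> i = j"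
proof (rule ccontr)
  assume a: "t \<in> piece i" "t \<in> piece j" "i \<noteq> j"
  show False
  proof (cases "i < j")
    case True
    hence "pstart (i+1) \<le> pstart j" by simp
    moreover have "pstart j \<le> t" "t < pstart (i+1)" using a unfolding piece_def by auto
    ultimately show False by linarith
  next
    case False
    hence "pstart (j+1) \<le> pstart i" using a by simp
    moreover have "pstart i \<le> t" "t < pstart (j+1)" using a unfolding piece_def by auto
    ultimately show False by linarith
  qed
qed

lemma pstart_in_piece: "pstart i \<in> piece i" by (simp add: piece_def)

lemma piece_01: "t \<in> piece i \<Longrightarrow> 0 < t \<and> t < 1"
  unfolding piece_def using pstart_pos[of i] pstart_lt1[of "i+1"] by auto

lemma piece_cover: assumes "0 < t" "t < 1" shows "\<exists>i. t \<in> piece i"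
proof (cases "t < 1/2")
  case True
  define f where "f = \<lfloor>log 2 t\<rfloor>"
  have "2 powr f \<le> t \<and> t < 2 powr (f + 1)"
    using floor_log_eq_powr_iff[of t 2 f] assms f_def by simp
  hence h: "pow2 f \<le> t" "t < pow2 (f + 1)" by (auto simp: pow2_def)
  have "pow2 f < pow2 (-1)" using h True pow2_num(2) by linarith
  hence "f < -1" by (simp only: pow2_less_iff)
  hence "f + 1 < 0" by simp
  hence "pstart (f + 2) = pow2 f" "pstart (f + 2 + 1) = pow2 (f+1)" by (simp_all add: pstart_def)
  thus ?thesis using h unfolding piece_def by (intro exI[of _ "f+2"]) simp
next
  case False
  define y where "y = log 2 (1 - t)"
  define c where "c = \<lceil>y\<rceil>"
  have c: "real_of_int c - 1 < y" "y \<le> real_of_int c" unfolding c_def by linarith+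
  have pc: "2 powr y = 1 - t" unfolding y_def using assms by simp
  have h1: "pow2 (c - 1) < 1 - t" using powr_less_mono[OF c(1), of 2] pc by (simp add: pow2_def)
  have h2: "1 - t \<le> pow2 c" using powr_mono[OF c(2), of 2] pc by (simp add: pow2_def)
  have "pow2 (c - 1) < pow2 (-1)" using h1 False pow2_num(2) by linarith
  hence "c - 1 < -1" by (simp only: pow2_less_iff)
  hence "c \<le> -1" by simp
  hence "pstart (- c) = 1 - pow2 c" "pstart (- c + 1) = 1 - pow2 (c - 1)" by (simp_all add: pstart_high)
  thus ?thesis using h1 h2 unfolding piece_def by (intro exI[of _ "-c"]) simp
qed

lemma pmap_start: "pmap i j (pstart i) = pstart j" by (simp add: pmap_def)
lemma pmap_id: "pmap i i t = t" by (simp add: pmap_def)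
lemma pmap_comp: "pmap j k (pmap i j t) = pmap i k t"
proof -
  have "pow2 (pexp j - pexp i) * pow2 (pexp k - pexp j) = pow2 (pexp k - pexp i)" by (simp add: pow2_add[symmetric])
  thus ?thesis unfolding pmap_def by (simp add: algebra_simps)
qed

lemma pmap_piece: assumes "t \<in> piece i" shows "pmap i j t \<in> piece j"
proof -
  have "pstart i \<le> t" "t < pstart i + pow2 (pexp i)" using assms pstart_Suc[of i] unfolding piece_def by auto
  hence "0 \<le> (t - pstart i) * pow2 (pexp j - pexp i)" "(t - pstart i) * pow2 (pexp j - pexp i) < pow2 (pexp i) * pow2 (pexp j - pexp i)"
    by auto
  moreover have "pow2 (pexp i) * pow2 (pexp j - pexp i) = pow2 (pexp j)" by (simp add: pow2_add[symmetric])
  ultimately show ?thesis unfolding piece_def pmap_def using pstart_Suc[of j] by auto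
qed

lemma pmap_inj: "pmap i j s = pmap i j t \<Longrightarrow> s = t" by (simp add: pmap_def)

lemma pmap_affine: "pmap i j t = pow2 (pexp j - pexp i) * t + (pstart j - pstart i * pow2 (pexp j - pexp i))"
  by (simp add: pmap_def algebra_simps)

lemma pmap_low: assumes "i \<le> 0" "j \<le> 0" shows "pmap i j t = pow2 (j - i) * t"
proof -
  have "pstart j = pstart i * pow2 (j - i)" using assms by (simp add: pstart_def pow2_add[symmetric])
  thus ?thesis using assms by (simp add: pmap_affine pexp_def)
qed

lemma pmap_high: assumes "1 \<le> i" "1 \<le> j" shows "pmap i j t = 1 - pow2 (i - j) * (1 - t)"
proof -
  have "pstart i * pow2 (i - j) = pow2 (i - j) - pow2 (- j)" if "i \<ge> 2"
    using assms that by (simp add: pstart_def algebra_simps pow2_add[symmetric])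
  show ?thesis
  proof -
    have e: "pexp j - pexp i = i - j" using assms by (simp add: pexp_def)
    have "pstart i = 1 - pow2 (- i)" "pstart j = 1 - pow2 (- j)" using assms by (auto simp: pstart_def)
    moreover have "pow2 (- i) * pow2 (i - j) = pow2 (- j)" by (simp add: pow2_add[symmetric])
    ultimately have "pstart i * pow2 (i - j) = pow2 (i - j) - pow2 (- j)"
      by (metis left_diff_distrib mult_1)

    thus ?thesis unfolding pmap_affine e using \<open>pstart j = 1 - pow2 (- j)\<close> by (simp add: algebra_simps)
  qed
qed

definition x0_inv :: "real \<Rightarrow> real" where
  "x0_inv s = (if s < 0 \<or> 1 \<le> s then s else if s \<le> 1/2 then s / 2 else if s \<le> 3/4 then s - 1/4 else 2 * s - 1)"

lemma x0_x0_inv: "x0 (x0_inv s) = s" unfolding x0_def x0_inv_def by (auto split: if_split_asm simp: field_simps)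
lemma x0_inv_x0: "x0_inv (x0 t) = t" unfolding x0_def x0_inv_def by (auto split: if_split_asm simp: field_simps)

lemma bij_x0: "bij x0" by (rule o_bij[where g=x0_inv]) (auto simp: fun_eq_iff x0_x0_inv x0_inv_x0)
lemma inv_x0: "inv x0 = x0_inv" by (metis inv_equality x0_x0_inv x0_inv_x0)

lemma x0_piece: assumes "t \<in> piece i" shows "x0 t = pmap i (i + 1) t"
proof -
  consider "i \<le> -1" | "i = 0" | "i \<ge> 1" by linarith
  thus ?thesis
  proof cases
    case 1
    hence "t < pstart (i + 1)" "pstart (i+1) \<le> pstart 0" using assms unfolding piece_def by auto
    hence "t < 1/4" "0 < t" using piece_01[OF assms] by (auto simp: pstart_def)
    thus ?thesis using 1 by (simp add: pmap_low x0_def)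
  next
    case 2
    hence "1/4 \<le> t" "t < 1/2" using assms unfolding piece_def by (auto simp: pstart_def)
    thus ?thesis using 2 by (simp add: x0_def pmap_def pstart_def pexp_def)
  next
    case 3
    hence "pstart 1 \<le> pstart i" by simp
    moreover have "pstart i \<le> t" using assms unfolding piece_def by auto
    ultimately have "pstart 1 \<le> t" by linarith
    hence "1/2 \<le> t" "t < 1" using piece_01[OF assms] by (auto simp: pstart_def)
    moreover have "pow2 (i - (i+1)) = 1/2" by simp
    ultimately show ?thesis using 3 by (auto simp: pmap_high x0_def field_simps)
  qed
qed

lemma x0_fix: "t \<le> 0 \<or> 1 \<le> t \<Longrightarrow> x0 t = t" by (auto simp: x0_def)

lemma x0_inv_piece: assumes "s \<in> piece j" shows "inv x0 s = pmap j (j - 1) s"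
proof -
  have "pmap j (j - 1) s \<in> piece (j - 1)" using pmap_piece[OF assms] .
  hence "x0 (pmap j (j - 1) s) = s" using x0_piece[of _ "j-1"] pmap_comp[of "j-1" j j] pmap_id by simp
  thus ?thesis using bij_inv_comp_pt[OF bij_x0] by metis
qed

lemma x0pow_piece: assumes "t \<in> piece i" shows "gpow x0 m t = pmap i (i + m) t"
proof (induction m rule: int_induct[where k=0])
  case base thus ?case by (simp add: pmap_id)
next
  case (step1 m)
  have "pmap i (i + m) t \<in> piece (i + m)" by (rule pmap_piece[OF assms])
  hence "x0 (pmap i (i + m) t) = pmap (i+m) (i+m+1) (pmap i (i + m) t)" by (rule x0_piece)
  thus ?case using step1 gpow_Suc[OF bij_x0, of m] pmap_comp by (simp add: add.assoc)
next
  case (step2 m)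
  have "pmap i (i + m) t \<in> piece (i + m)" by (rule pmap_piece[OF assms])
  hence "inv x0 (pmap i (i + m) t) = pmap (i+m) (i+m-1) (pmap i (i + m) t)" by (rule x0_inv_piece)
  thus ?case using step2 gpow_pred[OF bij_x0, of m] pmap_comp by (simp add: add_diff_eq)
qed

lemma x0pow_fix: "t \<le> 0 \<or> 1 \<le> t \<Longrightarrow> gpow x0 m t = t"
  using gpow_fix[OF bij_x0 x0_fix] by blast

lemma x0pow_01: "0 \<le> t \<Longrightarrow> t < 1 \<Longrightarrow> 0 \<le> gpow x0 m t \<and> gpow x0 m t < 1"
proof -
  assume "0 \<le> t" "t < 1"
  show ?thesis
  proof (cases "t = 0")
    case True thus ?thesis using x0pow_fix[of t m] by simp
  next
    case False
    then obtain i where "t \<in> piece i" using piece_cover \<open>0 \<le> t\<close> \<open>t < 1\<close> by force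
    thus ?thesis using x0pow_piece pmap_piece piece_01 by (metis less_eq_real_def)
  qed
qed

lemma dyadic_pstart[simp]: "dyadic (pstart i)"
  by (cases "i \<le> 1") (auto simp: pstart_low pstart_high intro: dyadic_diff)

definition breakpoints :: "int \<Rightarrow> int \<Rightarrow> real list" where
  "breakpoints a b = 0 # map pstart [a..b] @ [1]"

lemma breakpoints_sorted: "sorted_wrt (<) (breakpoints a b)"
proof -
  have "sorted_wrt (<) (map pstart [a..b])"
    unfolding sorted_wrt_map by (rule sorted_wrt_mono_rel[OF _ sorted_wrt_upto]) simp
  moreover have "\<forall>x\<in>set (map pstart [a..b]). 0 < x \<and> x < 1" using pstart_pos pstart_lt1 by auto
  ultimately show ?thesis by (simp add: breakpoints_def sorted_wrt_append)
qed

lemma breakpoints_length: "a \<le> b \<Longrightarrow> length (breakpoints a b) = nat (b - a) + 3"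
  by (simp add: breakpoints_def)

lemma breakpoints_nth:
  assumes "a \<le> b"
  shows "breakpoints a b ! 0 = 0" "j \<le> nat (b - a) \<Longrightarrow> breakpoints a b ! Suc j = pstart (a + int j)"
    "breakpoints a b ! (nat (b - a) + 2) = 1"
proof -
  have len: "length (map pstart [a..b]) = nat (b - a) + 1" using assms by simp
  show "breakpoints a b ! 0 = 0" by (simp add: breakpoints_def)
  show "j \<le> nat (b - a) \<Longrightarrow> breakpoints a b ! Suc j = pstart (a + int j)"
    using len assms by (simp add: breakpoints_def nth_append)
  show "breakpoints a b ! (nat (b - a) + 2) = 1" using len by (simp add: breakpoints_def nth_append)
qed

lemma V_intro:
  fixes f :: "real \<Rightarrow> real" and a b :: int
  assumes out: "\<forall>t. t \<notin> {0..<1} \<longrightarrow> f t = t" and bij: "bij_betw f {0..<1} {0..<1}" and ab: "a \<le> b"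
   and p0: "\<exists>k c. \<forall>t\<in>{0..<pstart a}. f t = pow2 k * t + c"
   and pm: "\<And>i. a \<le> i \<Longrightarrow> i < b \<Longrightarrow> \<exists>k c. \<forall>t\<in>piece i. f t = pow2 k * t + c"
   and pl: "\<exists>k c. \<forall>t\<in>{pstart b..<1}. f t = pow2 k * t + c"
   and d0: "dyadic (f 0)" and dK: "\<And>i. a \<le> i \<Longrightarrow> i \<le> b \<Longrightarrow> dyadic (f (pstart i))"
  shows "f \<in> thompsonV"
proof -
  define ps where "ps = breakpoints a b"
  define n where "n = nat (b - a)"
  note nth = breakpoints_nth[OF ab, folded ps_def n_def]
  have pieces: "dyadic (f (ps ! i)) \<and> (\<exists>k::int. \<exists>c::real. \<forall>t \<in> {ps ! i ..< ps ! (i+1)}. f t = 2 powr (real_of_int k) * t + c)"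
    if i: "i < length ps - 1" for i
  proof (cases i)
    case 0
    thus ?thesis using nth(1) nth(2)[of 0] p0 d0 by (simp add: pow2_def)
  next
    case (Suc j)
    hence j: "j \<le> n" using i breakpoints_length[OF ab] by (simp add: ps_def n_def)
    have pj: "ps ! i = pstart (a + int j)" "dyadic (f (ps ! i))" using nth(2)[OF j] Suc dK[of "a + int j"] j ab
      by (simp_all add: n_def)
    show ?thesis
    proof (cases "j < n")
      case True
      have "ps ! (i + 1) = pstart (a + int j + 1)" using nth(2)[of "Suc j"] True Suc by simp
      moreover obtain k c where "\<forall>t\<in>piece (a + int j). f t = pow2 k * t + c"
        using pm[of "a + int j"] True n_def by fastforce
      ultimately show ?thesis using pj unfolding piece_def pow2_def by auto
    next
      case False
      hence "ps ! (i + 1) = 1" "ps ! i = pstart b" using nth(3) Suc pj j ab by (simp_all add: n_def)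
      thus ?thesis using pl pj unfolding pow2_def by simp
    qed
  qed
  have "\<forall>p\<in>set ps. dyadic p" by (auto simp: ps_def breakpoints_def)
  thus ?thesis unfolding thompsonV_def using out bij breakpoints_length[OF ab] breakpoints_sorted pieces
    by (intro CollectI conjI exI[of _ ps]) (auto simp: ps_def breakpoints_def)
qed

lemma x0pow_bij01: "bij_betw (gpow x0 m) {0..<1} {0..<1}"
proof (rule bij_betw_byWitness[where f'="gpow x0 (-m)"])
  show "\<forall>a\<in>{0..<1}. gpow x0 (- m) (gpow x0 m a) = a"
    using gpow_inverse(2)[OF bij_x0, of m] by (metis comp_apply id_apply)
  show "\<forall>a\<in>{0..<1}. gpow x0 m (gpow x0 (- m) a) = a"
    using gpow_inverse(1)[OF bij_x0, of m] by (metis comp_apply id_apply)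
  show "gpow x0 m ` {0..<1} \<subseteq> {0..<1}" "gpow x0 (- m) ` {0..<1} \<subseteq> {0..<1}"
    using x0pow_01 by auto
qed

lemma piece_index_lt: "t \<in> piece i \<Longrightarrow> t < pstart j \<Longrightarrow> i < j"
  unfolding piece_def by (metis atLeastLessThan_iff pstart_less_iff order.strict_trans1)
lemma piece_index_ge: "t \<in> piece i \<Longrightarrow> pstart j \<le> t \<Longrightarrow> j \<le> i"
proof -
  assume "t \<in> piece i" "pstart j \<le> t"
  moreover have "t < pstart (i+1)" using \<open>t \<in> piece i\<close> unfolding piece_def by auto
  ultimately have "pstart j < pstart (i+1)" by linarith
  thus "j \<le> i" by simp
qed

lemma x0pow_near0:
  assumes "0 \<le> t" "t < pstart (- \<bar>m\<bar> - 1)" shows "gpow x0 m t = pow2 m * t"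
proof (cases "t = 0")
  case True thus ?thesis using x0pow_fix[of t m] by simp
next
  case False
  hence "0 < t" "t < 1" using assms pstart_lt1[of "- \<bar>m\<bar> - 1"] by auto
  then obtain i where i: "t \<in> piece i" using piece_cover by blast
  hence "i < - \<bar>m\<bar> - 1" using piece_index_lt assms by auto
  hence "i \<le> 0" "i + m \<le> 0" by auto
  thus ?thesis using x0pow_piece[OF i] pmap_low by simp
qed

lemma x0pow_near1:
  assumes "pstart (\<bar>m\<bar> + 1) \<le> t" "t < 1" shows "gpow x0 m t = 1 - pow2 (- m) * (1 - t)"
proof -
  have "0 < t" using assms pstart_pos[of "\<bar>m\<bar> + 1"] by linarith
  then obtain i where i: "t \<in> piece i" using piece_cover assms by blast
  hence "\<bar>m\<bar> + 1 \<le> i" using piece_index_ge assms by auto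
  hence "1 \<le> i" "1 \<le> i + m" by auto
  thus ?thesis using x0pow_piece[OF i] pmap_high[of i "i+m" t] by simp
qed

lemma x0pow_V: "gpow x0 m \<in> thompsonV"
proof (rule V_intro[where a="- \<bar>m\<bar> - 1" and b="\<bar>m\<bar> + 1"])
  show "\<forall>t. t \<notin> {0..<1} \<longrightarrow> gpow x0 m t = t" using x0pow_fix by auto
  show "bij_betw (gpow x0 m) {0..<1} {0..<1}" by (rule x0pow_bij01)
  show "\<exists>k c. \<forall>t\<in>{0..<pstart (- \<bar>m\<bar> - 1)}. gpow x0 m t = pow2 k * t + c"
    using x0pow_near0 by (intro exI[of _ m] exI[of _ 0]) auto
  show "\<exists>k c. \<forall>t\<in>piece i. gpow x0 m t = pow2 k * t + c" for i
    by (intro exI[of _ "pexp (i+m) - pexp i"] exI[of _ "pstart (i+m) - pstart i * pow2 (pexp (i+m) - pexp i)"] ballI)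
       (simp add: x0pow_piece pmap_affine)
  show "\<exists>k c. \<forall>t\<in>{pstart (\<bar>m\<bar> + 1)..<1}. gpow x0 m t = pow2 k * t + c"
    using x0pow_near1 by (intro exI[of _ "-m"] exI[of _ "1 - pow2 (-m)"]) (auto simp: algebra_simps)
  show "dyadic (gpow x0 m 0)" using x0pow_fix[of 0 m] by simp
  show "dyadic (gpow x0 m (pstart i))" for i
    using x0pow_piece[OF pstart_in_piece] pmap_start by simp
qed (simp)

text \<open>Continuity of x0 and x0^(-1) on [0,1): they are a minimum resp. maximum of affine maps.\<close>
lemma x0_min: "0 \<le> t \<Longrightarrow> t < 1 \<Longrightarrow> x0 t = min (2*t) (min (t + 1/4) (t/2 + 1/2))"
  by (auto simp: x0_def min_def)
lemma x0_inv_max: "0 \<le> t \<Longrightarrow> t < 1 \<Longrightarrow> x0_inv t = max (t/2) (max (t - 1/4) (2*t - 1))"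
  by (auto simp: x0_inv_def max_def)

lemma cont_x0: "continuous_on {0..<1} x0"
proof -
  have "continuous_on {0..<1} (\<lambda>t::real. min (2*t) (min (t + 1/4) (t/2 + 1/2)))"
    by (intro continuous_intros) auto
  thus ?thesis by (rule continuous_on_eq) (simp add: x0_min)
qed

lemma cont_x0_inv: "continuous_on {0..<1} x0_inv"
proof -
  have "continuous_on {0..<1} (\<lambda>t::real. max (t/2) (max (t - 1/4) (2*t - 1)))"
    by (intro continuous_intros) auto
  thus ?thesis by (rule continuous_on_eq) (simp add: x0_inv_max)
qed

lemma funpow_cont: assumes "continuous_on S f" "f ` S \<subseteq> S"
  shows "continuous_on S (f ^^ n) \<and> (f ^^ n) ` S \<subseteq> S"
proof (induction n)
  case 0 thus ?case by (simp add: continuous_on_id)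
next
  case (Suc n)
  have "continuous_on S (f \<circ> f ^^ n)"
    by (rule continuous_on_compose) (use Suc assms continuous_on_subset in blast)+
  thus ?case using Suc assms by auto
qed

lemma x0_01: "x0 ` {0..<1} \<subseteq> {0..<1}" by (auto simp: x0_def)
lemma x0_inv_01: "x0_inv ` {0..<1} \<subseteq> {0..<1}" by (auto simp: x0_inv_def)

lemma x0pow_cont: "continuous_on {0..<1} (gpow x0 m)"
  using funpow_cont[OF cont_x0 x0_01] funpow_cont[OF cont_x0_inv x0_inv_01]
  by (simp add: gpow_alt inv_x0)

lemma x0pow_F: "gpow x0 m \<in> thompsonF"
  unfolding thompsonF_def using x0pow_V x0pow_cont by simp

lemma x0_F: "x0 \<in> thompsonF" using x0pow_F[of 1] by simp

text \<open>Explicit continuous lifts of x0 and x0^(-1) to R: these show that powers of x0 are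
  continuous on the circle, i.e. lie in T.\<close>
definition lift_x0 :: "real \<Rightarrow> real" where "lift_x0 t = t + min (frac t) (min (1/4) ((1 - frac t)/2))"
definition lift_x0_inv :: "real \<Rightarrow> real" where "lift_x0_inv t = t - min (frac t / 2) (min (1/4) (1 - frac t))"

lemma circle_lift_x0: "circle_lift lift_x0 x0"
proof -
  have "continuous_on UNIV (\<lambda>t::real. min (frac t) (min (1/4) ((1 - frac t)/2)))"
    by (rule periodic_cont[where \<phi>="\<lambda>s::real. min s (min (1/4) ((1 - s)/2))", simplified])
       (auto intro!: continuous_intros)
  hence "continuous_on UNIV lift_x0" unfolding lift_x0_def by (intro continuous_on_add continuous_on_id)
  moreover have "frac (lift_x0 t) = x0 (frac t)" for t
  proof -
    have "lift_x0 t = of_int \<lfloor>t\<rfloor> + (frac t + min (frac t) (min (1/4) ((1 - frac t)/2)))"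
      by (simp add: lift_x0_def frac_def)
    moreover have "frac t + min (frac t) (min (1/4) ((1 - frac t)/2)) = x0 (frac t)"
    proof -
      have "s + min s (min (1/4) ((1 - s)/2)) = x0 s" if "0 \<le> s" "s < 1" for s::real
        using that by (auto simp: x0_def min_def field_simps)
      thus ?thesis using frac_lt_1[of t] frac_ge_0[of t] by blast
    qed
    moreover have "frac t \<in> {0..<1}" by (intro atLeastLessThan_iff[THEN iffD2] conjI frac_ge_0 frac_lt_1)
    hence "x0 (frac t) \<in> {0..<1}" using x0_01 by blast
    hence "0 \<le> x0 (frac t)" "x0 (frac t) < 1" by auto
    ultimately show ?thesis by (simp add: frac_add_int)
  qed
  ultimately show ?thesis by (simp add: circle_lift_def)
qed

lemma circle_lift_x0_inv: "circle_lift lift_x0_inv x0_inv"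
proof -
  have "continuous_on UNIV (\<lambda>t::real. min (frac t / 2) (min (1/4) (1 - frac t)))"
    by (rule periodic_cont[where \<phi>="\<lambda>s::real. min (s/2) (min (1/4) (1 - s))", simplified])
       (auto intro!: continuous_intros)
  hence "continuous_on UNIV lift_x0_inv" unfolding lift_x0_inv_def by (intro continuous_on_diff continuous_on_id)
  moreover have "frac (lift_x0_inv t) = x0_inv (frac t)" for t
  proof -
    have "lift_x0_inv t = of_int \<lfloor>t\<rfloor> + (frac t - min (frac t / 2) (min (1/4) (1 - frac t)))"
      by (simp add: lift_x0_inv_def frac_def)
    moreover have "frac t - min (frac t / 2) (min (1/4) (1 - frac t)) = x0_inv (frac t)"
    proof -
      have "s - min (s / 2) (min (1/4) (1 - s)) = x0_inv s" if "0 \<le> s" "s < 1" for s::real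
        using that by (auto simp: x0_inv_def min_def field_simps)
      thus ?thesis using frac_lt_1[of t] frac_ge_0[of t] by blast
    qed
    moreover have "frac t \<in> {0..<1}" by (intro atLeastLessThan_iff[THEN iffD2] conjI frac_ge_0 frac_lt_1)
    hence "x0_inv (frac t) \<in> {0..<1}" using x0_inv_01 by blast
    hence "0 \<le> x0_inv (frac t)" "x0_inv (frac t) < 1" by auto
    ultimately show ?thesis by (simp add: frac_add_int)
  qed
  ultimately show ?thesis by (simp add: circle_lift_def)
qed

lemma x0pow_T: "gpow x0 m \<in> thompsonT"
proof -
  have "\<exists>L. circle_lift L (gpow x0 m)"
    using circle_lift_funpow[OF circle_lift_x0] circle_lift_funpow[OF circle_lift_x0_inv]
    by (auto simp: gpow_alt inv_x0)
  then obtain L where "circle_lift L (gpow x0 m)" by blast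
  thus ?thesis unfolding thompsonT_def using x0pow_V circle_lift_continuous by blast
qed

definition x1_inv :: "real \<Rightarrow> real" where
  "x1_inv s = (if s < 0 \<or> 1 \<le> s then s else if s \<le> 1/2 then s else if s \<le> 3/4 then (s + 1/2) / 2
            else if s \<le> 7/8 then s - 1/8 else 2 * s - 1)"

lemma x1_x1_inv: "x1 (x1_inv s) = s" unfolding x1_def x1_inv_def by (auto split: if_split_asm simp: field_simps)
lemma x1_inv_x1: "x1_inv (x1 t) = t" unfolding x1_def x1_inv_def by (auto split: if_split_asm simp: field_simps)
lemma inv_x1: "inv x1 = x1_inv" by (metis inv_equality x1_x1_inv x1_inv_x1)

lemma x1_max: "0 \<le> t \<Longrightarrow> t < 1 \<Longrightarrow> x1 t = max t (min (2*t - 1/2) (min (t + 1/8) (t/2 + 1/2)))"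
  by (auto simp: x1_def min_def max_def)

lemma x1_F: "x1 \<in> thompsonF"
proof -
  have out: "\<forall>t. t \<notin> {0..<1} \<longrightarrow> x1 t = t" by (auto simp: x1_def)
  have bij: "bij_betw x1 {0..<1} {0..<1}"
    by (rule bij_betw_byWitness[where f'=x1_inv]) (auto simp: x1_x1_inv x1_inv_x1, auto simp: x1_def x1_inv_def)
  define ps :: "real list" where "ps = [0, 1/2, 5/8, 3/4, 1]"
  have pieces: "dyadic (x1 (ps ! i)) \<and> (\<exists>k::int. \<exists>c::real. \<forall>t \<in> {ps ! i ..< ps ! (i+1)}. x1 t = 2 powr (real_of_int k) * t + c)"
    if "i < 4" for i
  proof -
    have "i = 0 \<or> i = 1 \<or> i = 2 \<or> i = 3" using that by auto
    thus ?thesis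
    proof (elim disjE)
      assume "i = 0" thus ?thesis by (auto simp: ps_def x1_def intro!: exI[of _ 0] exI[of _ 0])
    next
      assume "i = 1" thus ?thesis
        by (auto simp: ps_def x1_def intro!: exI[of _ 1] exI[of _ "-1/2"])
    next
      assume "i = 2" thus ?thesis
        by (auto simp: ps_def x1_def intro!: exI[of _ 0] exI[of _ "1/8"])
    next
      assume i: "i = 3"
      have "2 powr real_of_int (-1::int) = 1/2" by (simp add: powr_minus)
      thus ?thesis using i
        by (auto simp: ps_def x1_def intro!: exI[of _ "-1"] exI[of _ "1/2"])
    qed
  qed
  have "x1 \<in> thompsonV" unfolding thompsonV_def
    using out bij pieces by (intro CollectI conjI exI[of _ ps]) (auto simp: ps_def)
  moreover have "continuous_on {0..<1} x1"
  proof -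
    have "continuous_on {0..<1} (\<lambda>t::real. max t (min (2*t - 1/2) (min (t + 1/8) (t/2 + 1/2))))"
      by (intro continuous_intros) auto
    thus ?thesis by (rule continuous_on_eq) (simp add: x1_max)
  qed
  ultimately show ?thesis by (simp add: thompsonF_def)
qed

definition bmap :: "real \<Rightarrow> real" where
  "bmap t = (if 1/2 < t \<and> t \<le> 5/8 then 2 * t - 1/2 else if 5/8 < t \<and> t < 7/8 then t / 2 + 7/16 else t)"
definition bmap_inv :: "real \<Rightarrow> real" where
  "bmap_inv s = (if 1/2 < s \<and> s \<le> 3/4 then (s + 1/2) / 2 else if 3/4 < s \<and> s < 7/8 then 2 * s - 7/8 else s)"

lemma bmap_bmap_inv: "bmap (bmap_inv s) = s" unfolding bmap_def bmap_inv_def by (auto split: if_split_asm simp: field_simps)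
lemma bmap_inv_bmap: "bmap_inv (bmap t) = t" unfolding bmap_def bmap_inv_def by (auto split: if_split_asm simp: field_simps)

lemma elb_eq: "elb = bmap"
proof
  fix t
  have "elb t = x0 (x1_inv (x0_inv (x1 t)))"
    by (simp add: elb_def gmul_def ginv_def inv_x0 inv_x1)
  also have "\<dots> = bmap t"
    unfolding x0_def x1_inv_def x0_inv_def x1_def bmap_def by (auto split: if_split_asm simp: field_simps)
  finally show "elb t = bmap t" .
qed

definition apow :: "int \<Rightarrow> real \<Rightarrow> real" where "apow k = gpow ela k"
definition sstart :: "int \<Rightarrow> real" where "sstart k = pstart (2 * k + 1)"
definition supp :: "int \<Rightarrow> real set" where "supp k = {sstart k <..< sstart (k + 1)}"

lemma ela_eq: "ela = x0 \<circ> x0" by (simp add: ela_def gmul_def)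
lemma apow_x0: "apow k = gpow x0 (2 * k)" by (simp add: apow_def ela_eq gpow_sq bij_x0)
lemma bij_ela: "bij ela" by (simp add: ela_eq bij_comp bij_x0)
lemma apow_add: "apow (m + n) = apow m \<circ> apow n" by (simp add: apow_def gpow_add bij_ela)
lemma apow_add_pt: "apow (m + n) t = apow m (apow n t)" by (simp add: apow_add)
lemma apow_0[simp]: "apow 0 = id" by (simp add: apow_def)
lemma apow_inv_pt: "apow k (apow (- k) t) = t" "apow (- k) (apow k t) = t"
  using apow_add_pt[of k "-k" t] apow_add_pt[of "-k" k t] by simp_all
lemma bij_apow: "bij (apow k)" by (simp add: apow_def gpow_bij bij_ela)
lemma inv_apow: "inv (apow k) = apow (- k)" by (simp add: apow_def gpow_inv bij_ela)
lemma apow_piece: "t \<in> piece i \<Longrightarrow> apow k t = pmap i (i + 2 * k) t" by (simp add: apow_x0 x0pow_piece)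
lemma apow_fix: "t \<le> 0 \<or> 1 \<le> t \<Longrightarrow> apow k t = t" by (simp add: apow_x0 x0pow_fix)
lemma apow_inj: "apow k s = apow k t \<Longrightarrow> s = t" by (metis apow_inv_pt(2))
lemma apow_V: "apow k \<in> thompsonV" by (simp add: apow_x0 x0pow_V)

lemma apow_sstart: "apow k (sstart j) = sstart (j + k)"
proof -
  have "apow k (pstart (2*j+1)) = pmap (2*j+1) (2*j+1 + 2*k) (pstart (2*j+1))" by (rule apow_piece[OF pstart_in_piece])
  also have "\<dots> = pstart (2*(j+k)+1)" by (simp add: pmap_start algebra_simps)
  finally show ?thesis by (simp add: sstart_def)
qed

lemma sstart_less_iff[simp]: "sstart i < sstart j \<longleftrightarrow> i < j" unfolding sstart_def pstart_less_iff by linarith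
lemma sstart_le_iff[simp]: "sstart i \<le> sstart j \<longleftrightarrow> i \<le> j" unfolding sstart_def pstart_le_iff by linarith
lemma sstart_eq_iff[simp]: "sstart i = sstart j \<longleftrightarrow> i = j" by (simp add: sstart_def)
lemma sstart_pos: "0 < sstart k" by (simp add: sstart_def pstart_pos)
lemma sstart_lt1: "sstart k < 1" by (simp add: sstart_def pstart_lt1)
lemma sstart_0: "sstart 0 = 1/2" by (simp add: sstart_def pstart_low)
lemma sstart_1: "sstart 1 = 7/8" by (simp add: sstart_def pstart_high)
lemma sstart_low: "k \<le> 0 \<Longrightarrow> sstart k = pow2 (2 * k - 1)"
  by (simp add: sstart_def pstart_low algebra_simps)
lemma sstart_high: "0 \<le> k \<Longrightarrow> sstart k = 1 - pow2 (- 2 * k - 1)"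
  by (simp add: sstart_def pstart_high algebra_simps)

lemma supp_01: "t \<in> supp k \<Longrightarrow> 0 < t \<and> t < 1"
  using sstart_pos[of k] sstart_lt1[of "k+1"] by (auto simp: supp_def)

lemma supp_pieces: "t \<in> supp j \<longleftrightarrow> (t \<in> piece (2*j+1) \<and> t \<noteq> pstart (2*j+1)) \<or> t \<in> piece (2*j+2)"
proof -
  have "pstart (2*j+1) < pstart (2*j+2)" "pstart (2*j+2) < pstart (2*j+3)" by simp_all
  moreover have "sstart (j+1) = pstart (2*j+3)" by (simp add: sstart_def algebra_simps)
  ultimately show ?thesis unfolding supp_def piece_def sstart_def
    by (auto simp: algebra_simps simp del: pstart_less_iff pstart_le_iff)
qed

lemma supp_unique: "t \<in> supp j \<Longrightarrow> t \<in> supp k \<Longrightarrow> j = k"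
proof (rule ccontr)
  assume a: "t \<in> supp j" "t \<in> supp k" "j \<noteq> k"
  show False
  proof (cases "j < k")
    case True
    hence "sstart (j+1) \<le> sstart k" by simp
    moreover have "t < sstart (j+1)" "sstart k < t" using a unfolding supp_def by auto
    ultimately show False by linarith
  next
    case False
    hence "sstart (k+1) \<le> sstart j" using a by simp
    moreover have "t < sstart (k+1)" "sstart j < t" using a unfolding supp_def by auto
    ultimately show False by linarith
  qed
qed

lemma sstart_notin_supp: "sstart j \<notin> supp k"
proof
  assume "sstart j \<in> supp k"
  hence "sstart k < sstart j" "sstart j < sstart (k+1)" by (auto simp: supp_def)
  hence "k < j" "j < k + 1" by simp_all
  thus False by simp
qed

lemma supp_cover: assumes "0 < t" "t < 1" "\<forall>k. t \<noteq> sstart k" shows "\<exists>k. t \<in> supp k"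
proof -
  obtain i where i: "t \<in> piece i" using piece_cover assms by blast
  define k where "k = (i - 1) div 2"
  have "i = 2*k+1 \<or> i = 2*k+2" unfolding k_def by presburger
  moreover have "t \<noteq> pstart (2*k+1)" using assms(3) by (simp add: sstart_def)
  ultimately show ?thesis using i supp_pieces by blast
qed

lemma apow_supp: assumes "t \<in> supp j" shows "apow k t \<in> supp (j + k)"
proof -
  have eq: "2 * (j + k) + 1 = 2 * j + 1 + 2 * k" "2 * (j + k) + 2 = 2 * j + 2 + 2 * k" by simp_all
  from assms[unfolded supp_pieces] show ?thesis
  proof (elim disjE conjE)
    assume t: "t \<in> piece (2*j+1)" "t \<noteq> pstart (2*j+1)"
    have "apow k t = pmap (2*j+1) (2*j+1+2*k) t" by (rule apow_piece[OF t(1)])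
    moreover have "pmap (2*j+1) (2*j+1+2*k) t \<noteq> pstart (2*j+1+2*k)"
      using t(2) pmap_start[of "2*j+1" "2*j+1+2*k"] pmap_inj by metis
    ultimately show ?thesis using pmap_piece[OF t(1)] unfolding supp_pieces eq by simp
  next
    assume t: "t \<in> piece (2*j+2)"
    show ?thesis using apow_piece[OF t] pmap_piece[OF t] unfolding supp_pieces eq by simp
  qed
qed

lemma apow_supp_iff: "apow k t \<in> supp (j + k) \<longleftrightarrow> t \<in> supp j"
  using apow_supp[of t j k] apow_supp[of "apow k t" "j+k" "-k"] apow_inv_pt(2)[of k t] by auto

lemma apow_supp_iff': "apow k t \<in> supp j \<longleftrightarrow> t \<in> supp (j - k)"
  using apow_supp_iff[of k t "j - k"] by simp

lemma supp_0: "supp 0 = {1/2 <..< 7/8}" by (simp add: supp_def sstart_0 sstart_1)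

lemma bij_bmap: "bij bmap" by (rule o_bij[where g=bmap_inv]) (auto simp: fun_eq_iff bmap_bmap_inv bmap_inv_bmap)
lemma inv_bmap: "inv bmap = bmap_inv" by (metis inv_equality bmap_bmap_inv bmap_inv_bmap)
lemma bmap_fix: "t \<notin> supp 0 \<Longrightarrow> bmap t = t" by (auto simp: supp_0 bmap_def)
lemma bmap_supp: "t \<in> supp 0 \<Longrightarrow> bmap t \<in> supp 0" by (auto simp: supp_0 bmap_def)
lemma bmap_inv_supp: "t \<in> supp 0 \<Longrightarrow> bmap_inv t \<in> supp 0" by (auto simp: supp_0 bmap_inv_def)
lemma bmap_moves: "t \<in> supp 0 \<Longrightarrow> bmap t \<noteq> t" by (auto simp: supp_0 bmap_def)

lemma bmap_pow_fix: "t \<notin> supp 0 \<Longrightarrow> gpow bmap n t = t"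
  by (rule gpow_fix[OF bij_bmap bmap_fix])

lemma bmap_pow_supp: assumes "t \<in> supp 0" shows "gpow bmap n t \<in> supp 0"
proof -
  have "(bmap ^^ k) t \<in> supp 0" for k by (induction k) (auto simp: assms bmap_supp)
  moreover have "(bmap_inv ^^ k) t \<in> supp 0" for k by (induction k) (auto simp: assms bmap_inv_supp)
  ultimately show ?thesis by (simp add: gpow_alt inv_bmap)
qed

text \<open>The germ of b^n at 1/2: b doubles the distance to 1/2 near 1/2, so b^n multiplies it
  by 2^n on a small enough interval.\<close>
lemma bmap_funpow_germ:
  "0 \<le> s \<Longrightarrow> s \<le> pow2 (- int k) / 8 \<Longrightarrow> (bmap ^^ k) (1/2 + s) = 1/2 + pow2 (int k) * s"
proof (induction k arbitrary: s)
  case 0 thus ?case by simp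
next
  case (Suc k)
  have s2: "2 * s \<le> pow2 (- int k) / 8" using Suc.prems pow2_neg_Suc[of k] by simp
  moreover have "pow2 (- int k) \<le> 1" by simp
  ultimately have "s \<le> 1/16" by linarith
  hence "bmap (1/2 + s) = 1/2 + 2 * s" using Suc.prems by (auto simp: bmap_def)
  moreover have "(bmap ^^ k) (1/2 + 2 * s) = 1/2 + pow2 (int k) * (2 * s)" using Suc s2 by simp
  moreover have "pow2 (int (Suc k)) = 2 * pow2 (int k)" using pow2_Suc[of "int k"] by (simp add: add.commute)
  ultimately show ?case by (simp add: funpow_Suc_right del: funpow.simps)
qed

lemma bmap_inv_funpow_germ:
  "0 \<le> s \<Longrightarrow> s \<le> 1/4 \<Longrightarrow> (bmap_inv ^^ k) (1/2 + s) = 1/2 + pow2 (- int k) * s"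
proof (induction k arbitrary: s)
  case 0 thus ?case by simp
next
  case (Suc k)
  have "bmap_inv (1/2 + s) = 1/2 + s / 2" using Suc.prems by (auto simp: bmap_inv_def field_simps)
  moreover have "(bmap_inv ^^ k) (1/2 + s/2) = 1/2 + pow2 (- int k) * (s/2)" using Suc by simp
  ultimately show ?case using pow2_neg_Suc[of k] by (simp add: funpow_Suc_right del: funpow.simps)
qed

lemma bmap_pow_germ:
  assumes "0 \<le> s" "s < pow2 (- \<bar>n\<bar>) / 8" shows "gpow bmap n (1/2 + s) = 1/2 + pow2 n * s"
proof (cases "0 \<le> n")
  case True
  hence "- \<bar>n\<bar> = - int (nat n)" by simp
  thus ?thesis using True assms bmap_funpow_germ[of s "nat n"] by (simp add: gpow_alt)
next
  case False
  have "pow2 (- \<bar>n\<bar>) \<le> 1" by simp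
  hence "s \<le> 1/4" using assms by linarith
  moreover have "- int (nat (-n)) = n" using False by simp
  ultimately show ?thesis
    using False assms bmap_inv_funpow_germ[of s "nat (-n)"] by (simp add: gpow_alt inv_bmap)
qed

text \<open>On (3/4, 7/8) the map b^(-1) doubles the distance to 7/8, so every point there is
  eventually moved into (1/2, 3/4].\<close>
lemma bmap_inv_reaches_low:
  "3/4 < t \<Longrightarrow> t < 7/8 \<Longrightarrow> pow2 (- int N) / 8 \<le> 7/8 - t \<Longrightarrow>
     \<exists>n. 1/2 < (bmap_inv ^^ n) t \<and> (bmap_inv ^^ n) t \<le> 3/4"
proof (induction N arbitrary: t)
  case 0 thus ?case by simp
next
  case (Suc N)
  have bt: "bmap_inv t = 2 * t - 7/8" using Suc.prems by (simp add: bmap_inv_def)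
  show ?case
  proof (cases "bmap_inv t \<le> 3/4")
    case True
    thus ?thesis using bt Suc.prems by (intro exI[of _ 1]) simp
  next
    case False
    have "pow2 (- int N) / 8 \<le> 7/8 - bmap_inv t" using Suc.prems bt pow2_neg_Suc[of N] by simp
    then obtain n where "1/2 < (bmap_inv ^^ n) (bmap_inv t) \<and> (bmap_inv ^^ n) (bmap_inv t) \<le> 3/4"
      using Suc.IH[of "bmap_inv t"] False bt Suc.prems by auto
    thus ?thesis by (intro exI[of _ "Suc n"]) (simp add: funpow_Suc_right del: funpow.simps)
  qed
qed

lemma bmap_inv_orbit: assumes "t \<in> supp 0" "0 < e" shows "\<exists>n. (bmap_inv ^^ n) t < 1/2 + e"
proof -
  have low: "\<exists>n. (bmap_inv ^^ n) t < 1/2 + e" if "1/2 < t" "t \<le> 3/4" for t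
  proof -
    obtain k :: nat where k: "pow2 (- int k) < e" using pow2_small \<open>0 < e\<close> by blast
    have "(bmap_inv ^^ k) t = 1/2 + pow2 (- int k) * (t - 1/2)"
      using bmap_inv_funpow_germ[of "t - 1/2" k] that by simp
    moreover have "pow2 (- int k) * (t - 1/2) \<le> pow2 (- int k) * 1"
      using that by (intro mult_left_mono) auto
    ultimately show ?thesis using k by (intro exI[of _ k]) linarith
  qed
  show ?thesis
  proof (cases "t \<le> 3/4")
    case True thus ?thesis using low assms by (simp add: supp_0)
  next
    case False
    have "0 < 8 * (7/8 - t)" using assms by (simp add: supp_0)
    then obtain N :: nat where "pow2 (- int N) < 8 * (7/8 - t)" using pow2_small by blast
    then obtain n where "1/2 < (bmap_inv ^^ n) t" "(bmap_inv ^^ n) t \<le> 3/4"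
      using bmap_inv_reaches_low[of t N] False assms by (auto simp: supp_0)
    then obtain n' where "(bmap_inv ^^ n') ((bmap_inv ^^ n) t) < 1/2 + e" using low by blast
    thus ?thesis by (intro exI[of _ "n' + n"]) (simp add: funpow_add)
  qed
qed

lemma bconj_eq: "bconj k = apow k \<circ> bmap \<circ> apow (- k)"
  by (simp add: bconj_def gmul_def apow_def elb_eq comp_assoc)

lemma bconj_pow: "gpow (bconj k) n = apow k \<circ> gpow bmap n \<circ> apow (- k)"
  using gpow_conj[OF bij_bmap bij_apow, of k n] by (simp add: bconj_eq inv_apow)

lemma bij_bconj: "bij (bconj k)" by (simp add: bconj_eq bij_comp bij_apow bij_bmap)

lemma bconj_pow_fix: "t \<notin> supp k \<Longrightarrow> gpow (bconj k) n t = t"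
proof -
  assume "t \<notin> supp k"
  hence "apow (- k) t \<notin> supp 0" using apow_supp_iff'[of "-k" t 0] by simp
  thus ?thesis by (simp add: bconj_pow bmap_pow_fix apow_inv_pt)
qed

lemma bconj_pow_supp: "t \<in> supp k \<Longrightarrow> gpow (bconj k) n t \<in> supp k"
proof -
  assume "t \<in> supp k"
  hence "apow (- k) t \<in> supp 0" using apow_supp_iff'[of "-k" t 0] by simp
  hence "gpow bmap n (apow (- k) t) \<in> supp 0" by (rule bmap_pow_supp)
  thus ?thesis using apow_supp_iff'[of k _ k] by (simp add: bconj_pow)
qed

lemma bconj_pow_add: "gpow (bconj k) (m + n) t = gpow (bconj k) m (gpow (bconj k) n t)"
  by (simp add: gpow_add bij_bconj)

text \<open>Since the supports are disjoint, these maps form an abelian group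
  isomorphic to the exponent vectors under addition; a^j acts on it by shifting indices.\<close>
definition supp_index :: "real \<Rightarrow> int" where "supp_index t = (THE k. t \<in> supp k)"
lemma supp_index: "t \<in> supp k \<Longrightarrow> supp_index t = k" unfolding supp_index_def using supp_unique by blast

definition bvec :: "(int \<Rightarrow> int) \<Rightarrow> real \<Rightarrow> real" where
  "bvec n t = (if \<exists>k. t \<in> supp k then gpow (bconj (supp_index t)) (n (supp_index t)) t else t)"

lemma bvec_supp: "t \<in> supp k \<Longrightarrow> bvec n t = gpow (bconj k) (n k) t"
  unfolding bvec_def using supp_index by auto
lemma bvec_out: "\<forall>k. t \<notin> supp k \<Longrightarrow> bvec n t = t"
  unfolding bvec_def by auto

lemma bconj_pow_fix_other: "t \<in> supp j \<Longrightarrow> j \<noteq> k \<Longrightarrow> gpow (bconj k) n t = t"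
  using bconj_pow_fix supp_unique by blast

lemma bconj_pow_supp_any: "t \<in> supp i \<Longrightarrow> gpow (bconj j) r t \<in> supp i"
  by (cases "i = j") (auto simp: bconj_pow_supp bconj_pow_fix_other)

lemma foldr_bvec: "distinct ks \<Longrightarrow>
  foldr (\<lambda>k acc. gmul (gpow (bconj k) (n k)) acc) ks id t = bvec (\<lambda>j. if j \<in> set ks then n j else 0) t"
proof (induction ks arbitrary: t)
  case Nil thus ?case by (cases "\<exists>k. t \<in> supp k") (auto simp: bvec_supp bvec_out)
next
  case (Cons k ks)
  have kn: "k \<notin> set ks" "distinct ks" using Cons.prems by auto
  have "foldr (\<lambda>k acc. gmul (gpow (bconj k) (n k)) acc) (k # ks) id t
      = foldr (\<lambda>k acc. gmul (gpow (bconj k) (n k)) acc) ks id (gpow (bconj k) (n k) t)"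
    by (simp add: gmul_def)
  also have "\<dots> = bvec (\<lambda>j. if j \<in> set ks then n j else 0) (gpow (bconj k) (n k) t)"
    using Cons.IH[OF kn(2), of "gpow (bconj k) (n k) t"] by (simp add: id_def)
  also have "\<dots> = bvec (\<lambda>j. if j \<in> set (k # ks) then n j else 0) t"
  proof (cases "\<exists>j. t \<in> supp j")
    case True
    then obtain j where j: "t \<in> supp j" by blast
    show ?thesis
    proof (cases "j = k")
      case True
      have "gpow (bconj k) (n k) t \<in> supp k" using bconj_pow_supp j True by blast
      thus ?thesis using j True kn by (simp add: bvec_supp)
    next
      case False
      thus ?thesis using j bconj_pow_fix_other[OF j False] by (simp add: bvec_supp)
    qed
  next
    case False
    thus ?thesis using bconj_pow_fix[of t k] by (simp add: bvec_out)
  qed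
  finally show ?case .
qed

lemma bprod_bvec: "bprod N n = bvec (\<lambda>j. if j \<in> {-N..N} then n j else 0)"
  unfolding bprod_def using foldr_bvec[of "[-N..N]" n] by auto

lemma bvec_comp: "bvec n1 (bvec n2 t) = bvec (\<lambda>k. n1 k + n2 k) t"
proof (cases "\<exists>k. t \<in> supp k")
  case True
  then obtain k where k: "t \<in> supp k" by blast
  have "bvec n2 t \<in> supp k" using bconj_pow_supp k by (simp add: bvec_supp)
  thus ?thesis using k by (simp add: bvec_supp bconj_pow_add)
qed (simp add: bvec_out)

lemma bvec_zero: "bvec (\<lambda>k. 0) = id"
proof
  fix t show "bvec (\<lambda>k. 0) t = id t" by (cases "\<exists>k. t \<in> supp k") (auto simp: bvec_supp bvec_out)
qed

lemma bvec_inverse: "bvec n (bvec (\<lambda>k. - n k) t) = t" "bvec (\<lambda>k. - n k) (bvec n t) = t"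
  using bvec_zero by (simp_all add: bvec_comp)

lemma bij_bvec: "bij (bvec n)"
  by (rule o_bij[where g="bvec (\<lambda>k. - n k)"]) (auto simp: bvec_inverse)
lemma inv_bvec: "inv (bvec n) = bvec (\<lambda>k. - n k)"
  by (rule inv_unique_comp) (auto simp: bvec_inverse)

lemma bconj_pow_pt: "gpow (bconj k) r t = apow k (gpow bmap r (apow (- k) t))"
  by (simp add: bconj_pow)

lemma bvec_shift: "apow j (bvec n t) = bvec (\<lambda>k. n (k - j)) (apow j t)"
proof (cases "\<exists>k. t \<in> supp k")
  case True
  then obtain k where k: "t \<in> supp k" by blast
  have Pk: "apow j t \<in> supp (k + j)" using apow_supp[OF k] .
  have "apow j (bvec n t) = apow j (apow k (gpow bmap (n k) (apow (- k) t)))" using k by (simp add: bvec_supp bconj_pow_pt)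
  also have "\<dots> = apow (k + j) (gpow bmap (n k) (apow (- (k + j)) (apow j t)))"
    by (simp add: apow_add_pt[symmetric] add.commute)
  also have "\<dots> = bvec (\<lambda>k. n (k - j)) (apow j t)" using Pk by (simp add: bvec_supp bconj_pow_pt)
  finally show ?thesis .
next
  case False
  hence "\<forall>k. apow j t \<notin> supp k" using apow_supp_iff' by blast
  thus ?thesis using False by (simp add: bvec_out)
qed

lemma bvec_commute_bconj: "bvec n (bconj k t) = bconj k (bvec n t)"
proof -
  have b: "bconj k = gpow (bconj k) 1" by simp
  show ?thesis
  proof (cases "\<exists>j. t \<in> supp j")
    case True
    then obtain j where j: "t \<in> supp j" by blast
    show ?thesis
    proof (cases "j = k")
      case True
      have "bconj k t \<in> supp k" using bconj_pow_supp[of t k 1] j True by simp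
      thus ?thesis using j True bconj_pow_add[of k "n k" 1 t] bconj_pow_add[of k 1 "n k" t] by (simp add: bvec_supp add.commute)
    next
      case False
      thus ?thesis using j bconj_pow_fix_other[OF j False, of 1] bconj_pow_fix_other[OF bconj_pow_supp[OF j] False, of 1] by (simp add: bvec_supp)
    qed
  next
    case False
    thus ?thesis using bconj_pow_fix[of t k 1] by (simp add: bvec_out)
  qed
qed

definition finsupp :: "(int \<Rightarrow> int) \<Rightarrow> bool" where "finsupp n \<longleftrightarrow> finite {k. n k \<noteq> 0}"

lemma finsupp_bound: "finsupp n \<Longrightarrow> \<exists>N. \<forall>k. n k \<noteq> 0 \<longrightarrow> k \<in> {-N..N}"
proof -
  assume "finsupp n"
  define N where "N = Max (insert 0 (abs ` {k. n k \<noteq> 0}))"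
  have "\<bar>k\<bar> \<le> N" if "n k \<noteq> 0" for k
    unfolding N_def using \<open>finsupp n\<close> that by (intro Max_ge) (auto simp: finsupp_def)
  thus ?thesis by (intro exI[of _ N]) (force simp: abs_le_iff)
qed

lemma bvec_bprod: assumes "finsupp n" shows "\<exists>N. bvec n = bprod N n"
proof -
  obtain N where N: "\<forall>k. n k \<noteq> 0 \<longrightarrow> k \<in> {-N..N}" using finsupp_bound[OF assms] by blast
  have "(\<lambda>j. if j \<in> {-N..N} then n j else 0) = n" by (rule ext) (use N in auto)
  thus ?thesis by (intro exI[of _ N]) (simp add: bprod_bvec)
qed

lemma finsupp_add: "finsupp n1 \<Longrightarrow> finsupp n2 \<Longrightarrow> finsupp (\<lambda>k. n1 k + n2 k)"
  unfolding finsupp_def by (rule finite_subset[of _ "{k. n1 k \<noteq> 0} \<union> {k. n2 k \<noteq> 0}"]) auto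
lemma finsupp_neg: "finsupp n \<Longrightarrow> finsupp (\<lambda>k. - n k)"
  unfolding finsupp_def by simp
lemma finsupp_shift: "finsupp n \<Longrightarrow> finsupp (\<lambda>k. n (k - j))"
proof -
  assume "finsupp n"
  have "{k. n (k - j) \<noteq> 0} = (\<lambda>k. k + j) ` {k. n k \<noteq> 0}" by (auto intro: image_eqI[of _ _ "_ - j"])
  thus ?thesis using \<open>finsupp n\<close> unfolding finsupp_def by simp
qed
lemma finsupp_zero: "finsupp (\<lambda>k. 0)" by (simp add: finsupp_def)

text \<open>wreath_form g: g is a^m followed by bvec n for a finitely supported n.  These maps are
  closed under products and inverses and include a and b, hence all of the subgroup they
  generate.\<close>
definition wreath_form :: "(real \<Rightarrow> real) \<Rightarrow> bool" where
  "wreath_form g \<longleftrightarrow> (\<exists>m n. finsupp n \<and> g = bvec n \<circ> apow m)"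

lemma wreath_form_mul: assumes "wreath_form g1" "wreath_form g2" shows "wreath_form (gmul g1 g2)"
proof -
  obtain m1 n1 where 1: "finsupp n1" "g1 = bvec n1 \<circ> apow m1" using assms(1) unfolding wreath_form_def by blast
  obtain m2 n2 where 2: "finsupp n2" "g2 = bvec n2 \<circ> apow m2" using assms(2) unfolding wreath_form_def by blast
  define n where "n = (\<lambda>k. n2 k + n1 (k - m2))"
  have "gmul g1 g2 = bvec n \<circ> apow (m2 + m1)"
  proof
    fix t
    have "gmul g1 g2 t = bvec n2 (apow m2 (bvec n1 (apow m1 t)))" by (simp add: 1 2 gmul_def)
    also have "\<dots> = bvec n2 (bvec (\<lambda>k. n1 (k - m2)) (apow m2 (apow m1 t)))" by (simp add: bvec_shift)
    also have "\<dots> = (bvec n \<circ> apow (m2 + m1)) t" by (simp add: bvec_comp n_def apow_add_pt)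
    finally show "gmul g1 g2 t = (bvec n \<circ> apow (m2 + m1)) t" .
  qed
  moreover have "finsupp n" unfolding n_def by (intro finsupp_add finsupp_shift 1 2)
  ultimately show ?thesis unfolding wreath_form_def by blast
qed

lemma wreath_form_inv: assumes "wreath_form g" shows "wreath_form (ginv g)"
proof -
  obtain m n where 1: "finsupp n" "g = bvec n \<circ> apow m" using assms unfolding wreath_form_def by blast
  define n' where "n' = (\<lambda>k. - n (k + m))"
  have "inv g = apow (- m) \<circ> inv (bvec n)" unfolding 1 by (simp add: o_inv_distrib bij_apow bij_bvec inv_apow)
  also have "\<dots> = bvec n' \<circ> apow (- m)"
  proof
    fix t
    show "(apow (- m) \<circ> inv (bvec n)) t = (bvec n' \<circ> apow (- m)) t"
      by (simp add: inv_bvec bvec_shift n'_def)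
  qed
  finally have "ginv g = bvec n' \<circ> apow (- m)" by (simp add: ginv_def)
  moreover have "finsupp n'"
  proof -
    have "finsupp (\<lambda>k. - n (k - (- m)))" by (intro finsupp_neg finsupp_shift 1)
    thus ?thesis by (simp add: n'_def)
  qed
  ultimately show ?thesis unfolding wreath_form_def by blast
qed

lemma elb_bvec: "elb = bvec (\<lambda>k. if k = 0 then 1 else 0)"
proof
  fix t
  show "elb t = bvec (\<lambda>k. if k = 0 then 1 else 0) t"
  proof (cases "\<exists>k. t \<in> supp k")
    case True
    then obtain k where k: "t \<in> supp k" by blast
    show ?thesis
    proof (cases "k = 0")
      case True thus ?thesis using k by (simp add: bvec_supp bconj_eq elb_eq)
    next
      case False
      hence "t \<notin> supp 0" using k supp_unique by blast
      thus ?thesis using k False by (simp add: bvec_supp elb_eq bmap_fix)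
    qed
  next
    case False
    thus ?thesis using bmap_fix[of t] by (simp add: bvec_out elb_eq)
  qed
qed

lemma gen_wreath_form: "g \<in> gen_by {ela, elb} \<Longrightarrow> wreath_form g"
proof (induction rule: gen_by.induct)
  case gen_id
  have "id = bvec (\<lambda>k. 0) \<circ> apow 0" by (simp add: bvec_zero)
  thus ?case unfolding wreath_form_def using finsupp_zero by blast
next
  case (gen_base s)
  show ?case
  proof (cases "s = ela")
    case True
    have "ela = bvec (\<lambda>k. 0) \<circ> apow 1" by (simp add: bvec_zero apow_def)
    thus ?thesis unfolding wreath_form_def using finsupp_zero True by blast
  next
    case False
    hence "s = elb" using gen_base by simp
    moreover have "finsupp (\<lambda>k. if k = 0 then 1 else 0 :: int)" unfolding finsupp_def by simp
    ultimately show ?thesis unfolding wreath_form_def using elb_bvec by (intro exI[of _ 0]) auto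
  qed
next
  case (gen_mul x y) thus ?case using wreath_form_mul by blast
next
  case (gen_inv x) thus ?case using wreath_form_inv by blast
qed

lemma bconj_gen: "bconj k \<in> gen_by {ela, elb}"
  unfolding bconj_def by (intro gen_by.intros gpow_gen) auto

lemma bprod_gen: "bprod N n \<in> gen_by {ela, elb}"
proof -
  have "foldr (\<lambda>k acc. gmul (gpow (bconj k) (n k)) acc) ks id \<in> gen_by {ela, elb}" for ks
  proof (induction ks)
    case Nil have "foldr (\<lambda>k acc. gmul (gpow (bconj k) (n k)) acc) [] id = id" by simp
    thus ?case by (metis gen_id)
  next
    case (Cons k ks) thus ?case by (simp only: foldr.simps comp_apply) (intro gen_mul gpow_gen bconj_gen)
  qed
  thus ?thesis by (simp add: bprod_def)
qed

text \<open>The conjugates of b commute pairwise, since their supports are disjoint.\<close>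
lemma bconj_commute: "gmul (bconj j) (bconj k) = gmul (bconj k) (bconj j)"
proof -
  have "bconj k (bconj j t) = bconj j (bconj k t)" for t
  proof (cases "j = k")
    case False
    show ?thesis
    proof (cases "\<exists>i. t \<in> supp i")
      case True
      then obtain i where i: "t \<in> supp i" by blast
      have Xj: "bconj j t \<in> supp i" "bconj k t \<in> supp i" using bconj_pow_supp_any[OF i, of _ 1] by simp_all
      show ?thesis
      proof (cases "i = j")
        case True
        thus ?thesis using bconj_pow_fix_other[OF i, of k 1] bconj_pow_fix_other[OF Xj(1), of k 1] False by simp
      next
        case F2: False
        hence "bconj j t = t" "bconj j (bconj k t) = bconj k t" using bconj_pow_fix_other[OF i F2, of 1] bconj_pow_fix_other[OF Xj(2) F2, of 1] by simp_all
        thus ?thesis by simp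
      qed
    next
      case False
      thus ?thesis using bconj_pow_fix[of t j 1] bconj_pow_fix[of t k 1] by simp
    qed
  qed simp
  thus ?thesis by (auto simp: gmul_def)
qed

lemma gen_normal_form: "g \<in> gen_by {ela, elb} \<Longrightarrow> \<exists>N m n. g = gmul (gpow ela m) (bprod N n)"
proof -
  assume "g \<in> gen_by {ela, elb}"
  then obtain m n where "finsupp n" "g = bvec n \<circ> apow m" using gen_wreath_form unfolding wreath_form_def by blast
  moreover obtain N where "bvec n = bprod N n" using bvec_bprod[OF \<open>finsupp n\<close>] by blast
  ultimately show ?thesis by (intro exI[of _ N] exI[of _ m] exI[of _ n]) (simp add: gmul_def apow_def)
qed

text \<open>The normal form of the identity is trivial: a^m is detected on the end points
  sstart k, and each exponent n k on the germ of b^(n k) at 1/2, transported to supp k.\<close>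
lemma wreath_form_unique: assumes "gmul (gpow ela m) (bprod N n) = id" shows "m = 0 \<and> (\<forall>k \<in> {- N..N}. n k = 0)"
proof -
  define n' where "n' = (\<lambda>j. if j \<in> {-N..N} then n j else 0)"
  have e: "bvec n' (apow m t) = t" for t
    using fun_cong[OF assms, of t] by (simp add: gmul_def bprod_bvec n'_def apow_def)
  have "bvec n' (apow m (sstart 0)) = sstart m" using apow_sstart[of m 0] sstart_notin_supp by (simp add: bvec_out)
  hence "sstart m = sstart 0" using e by simp
  hence m: "m = 0" by simp
  have "n k = 0" if k: "k \<in> {-N..N}" for k
  proof -
    define r where "r = n k"
    define s where "s = pow2 (- \<bar>r\<bar>) / 16"
    have s: "0 < s" "s < pow2 (- \<bar>r\<bar>) / 8" "s \<le> 1/16" by (auto simp: s_def)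
    have "1/2 + s \<in> supp 0" using s by (simp add: supp_0)
    hence tD: "apow k (1/2 + s) \<in> supp k" using apow_supp[of "1/2+s" 0 k] by simp
    have "bvec n' (apow k (1/2 + s)) = apow k (1/2 + s)" using e[of "apow k (1/2+s)"] m by simp
    hence "apow k (gpow bmap r (1/2 + s)) = apow k (1/2 + s)"
      using tD k by (simp add: bvec_supp n'_def r_def bconj_pow_pt apow_inv_pt)
    hence "gpow bmap r (1/2 + s) = 1/2 + s" using apow_inj by blast
    hence "pow2 r * s = s" using bmap_pow_germ[of s r] s by simp
    hence "pow2 r = 1" using s by simp
    thus ?thesis by (simp add: r_def)
  qed
  thus ?thesis using m by blast
qed

section \<open>The centraliser of a in V\<close>

lemma ela_piece: "t \<in> piece i \<Longrightarrow> ela t = pmap i (i + 2) t"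
  using apow_piece[of t i 1] by (simp add: apow_def)

lemma x0pow_comm: "gpow x0 m (gpow x0 n t) = gpow x0 n (gpow x0 m t)"
  using gpow_comm[OF bij_x0, of m n] by (metis comp_apply)

text \<open>An element of V commuting with a fixes 0: otherwise v 0 would be a fixed point of a in
  (0,1), but a moves every piece two steps to the right.\<close>
lemma commutes_a_fixes_0:
  assumes v: "v \<in> thompsonV" and c: "\<forall>t. v (ela t) = ela (v t)" shows "v 0 = 0"
proof (rule ccontr)
  assume "v 0 \<noteq> 0"
  moreover have "v 0 \<in> {0..<1}" using V_01[OF v] by simp
  ultimately obtain i where i: "v 0 \<in> piece i" using piece_cover by force
  have "ela (v 0) = v 0" using c[rule_format, of 0] x0_fix[of 0] by (simp add: ela_eq)
  hence "pmap i (i + 2) (v 0) \<in> piece i" using ela_piece[OF i] i by simp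
  moreover have "pmap i (i + 2) (v 0) \<in> piece (i + 2)" by (rule pmap_piece[OF i])
  ultimately show False using piece_unique by fastforce
qed

text \<open>An element v commuting with a
  is linear with slope 2^k near 0, so it agrees with x0^k there; conjugating by powers of a
  spreads this agreement over all of (0,1).\<close>
lemma centraliser_a:
  assumes v: "v \<in> thompsonV" and c: "\<forall>t. v (ela t) = ela (v t)" shows "\<exists>k. v = gpow x0 k"
proof -
  have cP: "v (apow n t) = apow n (v t)" for n t
  proof -
    have "v \<circ> ela = ela \<circ> v" using c by auto
    hence "v \<circ> gpow ela n = gpow ela n \<circ> v" by (rule gpow_commute[OF bij_ela])
    thus ?thesis unfolding apow_def by (metis comp_apply)
  qed
  have v0: "v 0 = 0" by (rule commutes_a_fixes_0[OF v c])
  obtain k where "rslope v 0 k" using V_rslope[OF v] by blast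
  then obtain e where e: "e > 0" "\<forall>s. 0 \<le> s \<and> s < e \<longrightarrow> v s = pow2 k * s"
    unfolding rslope_def using v0 by auto
  obtain K0 where K0: "\<forall>i\<le>K0. pow2 i < e" using pow2_small_int[OF e(1)] by blast
  have "v t = gpow x0 k t" for t
  proof (cases "0 < t \<and> t < 1")
    case False
    hence "t \<le> 0 \<or> 1 \<le> t" by auto
    moreover have "v t = t" if "t \<noteq> 0" "t \<le> 0 \<or> 1 \<le> t" using V_out[OF v] that by auto
    ultimately show ?thesis using v0 x0pow_fix[of t k] by (cases "t = 0") auto
  next
    case True
    then obtain i where i: "t \<in> piece i" using piece_cover by blast
    define n :: int where "n = \<bar>i\<bar> + \<bar>K0\<bar> + \<bar>k\<bar> + 1"
    define j where "j = i - 2 * n"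
    have j: "j \<le> 0" "j + k \<le> 0" "j - 1 \<le> K0" by (auto simp: j_def n_def)
    define s where "s = apow (- n) t"
    have s: "s \<in> piece j" unfolding s_def j_def using apow_piece[OF i, of "-n"] pmap_piece[OF i] by simp
    have "s < pstart (j + 1)" using s by (simp add: piece_def)
    also have "pstart (j + 1) = pow2 (j - 1)" using j by (simp add: pstart_low)
    also have "\<dots> < e" using K0 j by simp
    finally have "v s = pow2 k * s" using e piece_01[OF s] by simp
    also have "\<dots> = gpow x0 k s" using x0pow_piece[OF s, of k] pmap_low[of j "j+k"] j by simp
    finally have vs: "v s = gpow x0 k s" .
    have "t = apow n s" unfolding s_def by (simp add: apow_inv_pt)
    hence "v t = apow n (v s)" using cP by simp
    also have "\<dots> = gpow x0 k (apow n s)" unfolding vs apow_x0 by (rule x0pow_comm)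
    finally show ?thesis using \<open>t = apow n s\<close> by simp
  qed
  thus ?thesis by blast
qed

text \<open>A map with a linear right germ at 1/2 that commutes with b fixes 1/2: its value c there
  is fixed by b, so c lies outside (1/2,7/8), yet points just right of c are moved by b.\<close>
lemma commutes_bmap_half:
  assumes comm: "\<forall>t. g (bmap t) = bmap (g t)" and rg: "rslope g (1/2) j"
  shows "g (1/2) = 1/2"
proof -
  obtain e where e: "e > 0" "\<forall>s. 0 \<le> s \<and> s < e \<longrightarrow> g (1/2 + s) = g (1/2) + pow2 j * s"
    using rg unfolding rslope_def by blast
  define c where "c = g (1/2)"
  have "g (1/2) = bmap (g (1/2))" using comm[rule_format, of "1/2"] by (simp add: bmap_def)
  hence cD: "c \<notin> supp 0" using bmap_moves unfolding c_def by metis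
  define d where "d = min (e/2) (1/16)"
  have d: "0 < d" "d \<le> e/2" "d \<le> 1/16" using e by (auto simp: d_def)
  have inD: "c + pow2 j * s \<in> supp 0" if "0 < s" "s < d" for s
  proof -
    have "bmap (1/2 + s) = 1/2 + 2 * s" using that d by (auto simp: bmap_def)
    hence "g (1/2 + 2 * s) = bmap (g (1/2 + s))" using comm[rule_format, of "1/2+s"] by simp
    moreover have "g (1/2 + 2 * s) = c + pow2 j * (2 * s)" using e that d by (simp add: c_def)
    moreover have "g (1/2 + s) = c + pow2 j * s" using e that d by (simp add: c_def)
    ultimately have "bmap (c + pow2 j * s) = c + pow2 j * (2 * s)" by simp
    moreover have "0 < pow2 j * s" using that by simp
    ultimately have "bmap (c + pow2 j * s) \<noteq> c + pow2 j * s" by linarith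
    thus ?thesis using bmap_fix by blast
  qed
  show ?thesis
  proof (rule ccontr)
    assume "g (1/2) \<noteq> 1/2"
    hence cne: "c \<noteq> 1/2" by (simp add: c_def)
    show False
    proof (cases "c < 1/2")
      case True
      define s where "s = min (d/2) ((1/2 - c) / (2 * pow2 j))"
      have s: "0 < s" "s < d" using d True by (auto simp: s_def)
      have "pow2 j * s \<le> pow2 j * ((1/2 - c) / (2 * pow2 j))" by (intro mult_left_mono) (auto simp: s_def)
      hence "c + pow2 j * s < 1/2" using True by simp
      thus False using inD[OF s] by (simp add: supp_0)
    next
      case False
      hence "7/8 \<le> c" using cD cne by (auto simp: supp_0)
      moreover have "0 < pow2 j * (d/2)" using d by simp
      moreover have "c + pow2 j * (d/2) \<in> supp 0" using inD[of "d/2"] d by simp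
      hence "c + pow2 j * (d/2) < 7/8" by (simp add: supp_0)
      ultimately show False by linarith
    qed
  qed
qed

text \<open>Such a map agrees on supp 0 with the power of b given by its slope at 1/2: the two
  agree near 1/2, and every orbit of b in supp 0 comes arbitrarily close to 1/2.\<close>
lemma commutes_bmap_supp:
  assumes comm: "\<forall>t. g (bmap t) = bmap (g t)" and rg: "rslope g (1/2) j" and t: "t \<in> supp 0"
  shows "g t = gpow bmap j t"
proof -
  obtain e where e: "e > 0" "\<forall>s. 0 \<le> s \<and> s < e \<longrightarrow> g (1/2 + s) = g (1/2) + pow2 j * s"
    using rg unfolding rslope_def by blast
  have gcomm: "g (gpow bmap n t) = gpow bmap n (g t)" for n t
    using gpow_commute[OF bij_bmap, of g n] comm by (metis comp_apply fun_eq_iff)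
  define d where "d = min e (pow2 (- \<bar>j\<bar>) / 8)"
  have "0 < d" using e by (simp add: d_def)
  then obtain n where n: "(bmap_inv ^^ n) t < 1/2 + d" using bmap_inv_orbit[OF t] by blast
  define u where "u = gpow bmap (- int n) t"
  have u: "u = (bmap_inv ^^ n) t" unfolding u_def by (simp add: gpow_alt inv_bmap)
  have "u \<in> supp 0" unfolding u_def by (rule bmap_pow_supp[OF t])
  hence s: "0 < u - 1/2" "u - 1/2 < e" "u - 1/2 < pow2 (- \<bar>j\<bar>) / 8" using n u by (auto simp: supp_0 d_def)
  have "g u = g (1/2) + pow2 j * (u - 1/2)" using e(2) s by (metis add_diff_cancel_left' diff_add_cancel less_eq_real_def)
  also have "\<dots> = gpow bmap j u"
    using bmap_pow_germ[of "u - 1/2" j] s commutes_bmap_half[OF comm rg] by simp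
  finally have gu: "g u = gpow bmap j u" .
  have tu: "t = gpow bmap (int n) u" unfolding u_def using gpow_add[OF bij_bmap, of "int n" "- int n"]
    by (metis add.right_inverse comp_apply gpow_0 id_apply)
  have "g t = gpow bmap (int n) (gpow bmap j u)" unfolding tu gcomm gu ..
  also have "\<dots> = gpow bmap j (gpow bmap (int n) u)"
    using gpow_comm[OF bij_bmap, of "int n" j] by (metis comp_apply)
  finally show ?thesis using tu by simp
qed

lemma affine_fixing_two_points:
  fixes A B x y :: real
  assumes "x \<noteq> y" "A * x + B = x" "A * y + B = y" shows "A = 1" "B = 0"
proof -
  have "(A - 1) * (x - y) = 0" using assms(2,3) by (simp add: algebra_simps)
  thus "A = 1" using assms(1) by simp
  thus "B = 0" using assms(2) by simp
qed

lemma sstart_small: assumes "0 < e" shows "\<exists>k. sstart k < e"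
proof -
  obtain K where K: "\<forall>i\<le>K. pow2 i < e" using pow2_small_int[OF assms] by blast
  define k where "k = - \<bar>K\<bar> - 1"
  have "2 * k - 1 \<le> K" by (simp add: k_def)
  hence "pow2 (2 * k - 1) < e" using K by blast
  moreover have "sstart k = pow2 (2 * k - 1)" by (simp add: sstart_low k_def)
  ultimately have "sstart k < e" by simp
  thus ?thesis by blast
qed

lemma sstart_near1: assumes "q < 1" shows "\<exists>k. q \<le> sstart k"
proof -
  obtain K where K: "\<forall>i\<le>K. pow2 i < 1 - q" using pow2_small_int[of "1 - q"] assms by auto
  define k where "k = \<bar>K\<bar> + 1"
  have "- 2 * k - 1 \<le> K" by (simp add: k_def)
  hence "pow2 (- 2 * k - 1) < 1 - q" using K by blast
  moreover have "sstart k = 1 - pow2 (- 2 * k - 1)" by (simp add: sstart_high k_def)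
  ultimately have "q \<le> sstart k" by linarith
  thus ?thesis by blast
qed

text \<open>A map commuting with every conjugate of b and having linear right germs everywhere fixes
  every end point sstart k and agrees on each supp k with a power of the k-th conjugate:
  conjugated back to supp 0 it commutes with b.\<close>
lemma commutes_conjugates_on_supp:
  assumes germs: "\<forall>p. \<exists>j. rslope \<beta> p j" and comm: "\<forall>k t. bconj k (\<beta> t) = \<beta> (bconj k t)"
  shows "\<beta> (sstart k) = sstart k \<and> (\<exists>j. \<forall>t\<in>supp k. \<beta> t = gpow (bconj k) j t)"
proof -
  define g where "g = (\<lambda>t. apow (- k) (\<beta> (apow k t)))"
  have gcomm: "\<forall>t. g (bmap t) = bmap (g t)"
  proof
    fix t
    have "apow k (bmap t) = bconj k (apow k t)" by (simp add: bconj_eq apow_inv_pt)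
    hence "g (bmap t) = apow (- k) (bconj k (\<beta> (apow k t)))" by (simp add: g_def comm)
    also have "\<dots> = bmap (g t)" by (simp add: bconj_eq apow_inv_pt g_def)
    finally show "g (bmap t) = bmap (g t)" .
  qed
  obtain j1 where j1: "rslope (apow k) (1/2) j1" using V_rslope[OF apow_V] by blast
  obtain j2 where j2: "rslope \<beta> (apow k (1/2)) j2" using germs by blast
  obtain j3 where j3: "rslope (apow (- k)) (\<beta> (apow k (1/2))) j3" using V_rslope[OF apow_V] by blast
  have "rslope g (1/2) (j1 + j2 + j3)"
    unfolding g_def by (rule rslope_comp[OF rslope_comp[OF j1 j2]]) (simp add: j3)
  note g_half = commutes_bmap_half[OF gcomm this] and g_supp = commutes_bmap_supp[OF gcomm this]
  have "sstart k = apow k (1/2)" using apow_sstart[of k 0] sstart_0 by simp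
  moreover have "\<beta> (apow k (1/2)) = apow k (g (1/2))" by (simp add: g_def apow_inv_pt)
  ultimately have "\<beta> (sstart k) = sstart k" using g_half by simp
  moreover have "\<beta> t = gpow (bconj k) (j1 + j2 + j3) t" if t: "t \<in> supp k" for t
  proof -
    have "apow (- k) t \<in> supp 0" using apow_supp_iff'[of "-k" t 0] t by simp
    hence "apow k (g (apow (- k) t)) = gpow (bconj k) (j1 + j2 + j3) t"
      using g_supp by (simp add: bconj_pow_pt)
    thus ?thesis by (simp add: g_def apow_inv_pt)
  qed
  ultimately show ?thesis by blast
qed

lemma fixes_sstart_id_near0:
  assumes r: "rslope \<beta> 0 r" and fixed: "\<forall>k. \<beta> (sstart k) = sstart k"
  shows "\<exists>k0. \<forall>t. 0 \<le> t \<and> t < sstart k0 \<longrightarrow> \<beta> t = t"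
proof -
  obtain e where e: "e > 0" "\<forall>s. 0 \<le> s \<and> s < e \<longrightarrow> \<beta> (0 + s) = \<beta> 0 + pow2 r * s"
    using r unfolding rslope_def by blast
  define c where "c = \<beta> 0"
  have aff: "\<beta> s = pow2 r * s + c" if "0 \<le> s" "s < e" for s
  proof -
    have "\<beta> (0 + s) = \<beta> 0 + pow2 r * s" using e(2) that by blast
    thus ?thesis by (simp add: c_def)
  qed
  obtain k where "sstart k < e" using sstart_small[OF e(1)] by blast
  hence "sstart ((k - 1) + 1) < e" by simp
  then obtain k0 where k0: "sstart (k0 + 1) < e" by blast
  have lt: "sstart k0 < sstart (k0 + 1)" by simp
  have small: "0 \<le> sstart k0" "sstart k0 < e" "0 \<le> sstart (k0 + 1)"
    using k0 lt sstart_pos[of k0] sstart_pos[of "k0 + 1"] by linarith+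
  have eqs: "pow2 r * sstart k0 + c = sstart k0" "pow2 r * sstart (k0 + 1) + c = sstart (k0 + 1)"
    using aff[OF small(1,2)] aff[OF small(3) k0] fixed by simp_all
  have "sstart k0 \<noteq> sstart (k0 + 1)" using lt by simp
  note coeffs = affine_fixing_two_points[OF this eqs]
  have "\<beta> t = t" if "0 \<le> t" "t < sstart k0" for t using aff[of t] that small(2) coeffs by simp
  thus ?thesis by blast
qed

lemma fixes_sstart_id_near1:
  assumes q: "q < 1" and aff: "\<forall>t. q \<le> t \<and> t < 1 \<longrightarrow> \<beta> t = A * t + B"
    and fixed: "\<forall>k. \<beta> (sstart k) = sstart k"
  shows "\<exists>k1. \<forall>t. sstart k1 \<le> t \<and> t < 1 \<longrightarrow> \<beta> t = t"
proof -
  obtain k1 where k1: "q \<le> sstart k1" using sstart_near1[OF q] by blast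
  have lt: "sstart k1 < sstart (k1 + 1)" by simp
  have "q \<le> sstart (k1 + 1)" using k1 lt by linarith
  hence "\<beta> (sstart (k1 + 1)) = A * sstart (k1 + 1) + B" using aff sstart_lt1[of "k1 + 1"] by blast
  moreover have "\<beta> (sstart k1) = A * sstart k1 + B" using aff k1 sstart_lt1[of k1] by blast
  ultimately have eqs: "A * sstart k1 + B = sstart k1" "A * sstart (k1 + 1) + B = sstart (k1 + 1)"
    using fixed by simp_all
  have "sstart k1 \<noteq> sstart (k1 + 1)" using lt by simp
  from affine_fixing_two_points[OF this eqs] show ?thesis using aff k1 by (intro exI[of _ k1]) auto
qed

lemma commutes_conjugates_in_base_group:
  assumes germs: "\<forall>p. \<exists>j. rslope \<beta> p j" and comm: "\<forall>k t. bconj k (\<beta> t) = \<beta> (bconj k t)"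
    and q: "q < 1" and aff: "\<forall>t. q \<le> t \<and> t < 1 \<longrightarrow> \<beta> t = A * t + B"
    and out: "\<forall>t. t < 0 \<or> 1 \<le> t \<longrightarrow> \<beta> t = t"
  shows "\<exists>n. finsupp n \<and> \<beta> = bvec n"
proof -
  note on_supp = commutes_conjugates_on_supp[OF germs comm]
  have fixed: "\<forall>k. \<beta> (sstart k) = sstart k" using on_supp by blast
  obtain jk where jk: "\<forall>k. \<forall>t\<in>supp k. \<beta> t = gpow (bconj k) (jk k) t"
    using choice[of "\<lambda>k j. \<forall>t\<in>supp k. \<beta> t = gpow (bconj k) j t"] on_supp by blast
  obtain r where "rslope \<beta> 0 r" using germs by blast
  then obtain k0 where low: "\<forall>t. 0 \<le> t \<and> t < sstart k0 \<longrightarrow> \<beta> t = t"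
    using fixes_sstart_id_near0 fixed by blast
  obtain k1 where high: "\<forall>t. sstart k1 \<le> t \<and> t < 1 \<longrightarrow> \<beta> t = t"
    using fixes_sstart_id_near1[OF q aff fixed] by blast
  define n where "n k = (if k0 \<le> k \<and> k < k1 then jk k else 0)" for k
  have "\<beta> t = bvec n t" for t
  proof (cases "\<exists>k. t \<in> supp k")
    case True
    then obtain k where k: "t \<in> supp k" by blast
    have "sstart k < t" "t < sstart (k + 1)" "t < 1" using k supp_01 by (auto simp: supp_def)
    moreover have "0 < sstart k" by (rule sstart_pos)
    ultimately have "\<beta> t = t" if "\<not> (k0 \<le> k \<and> k < k1)"
    proof (cases "k < k0")
      case True
      hence "sstart (k + 1) \<le> sstart k0" by simp
      hence "0 \<le> t \<and> t < sstart k0" using \<open>sstart k < t\<close> \<open>t < sstart (k + 1)\<close> \<open>0 < sstart k\<close> by linarith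
      thus ?thesis using low by blast
    next
      case False
      hence "sstart k1 \<le> sstart k" using that by simp
      hence "sstart k1 \<le> t \<and> t < 1" using \<open>sstart k < t\<close> \<open>t < 1\<close> by linarith
      thus ?thesis using high by blast
    qed
    thus ?thesis using k jk by (cases "k0 \<le> k \<and> k < k1") (simp_all add: bvec_supp n_def)
  next
    case False
    have "t < 0 \<or> 1 \<le> t \<or> t = 0 \<or> (\<exists>k. t = sstart k)" using supp_cover[of t] False by force
    hence "\<beta> t = t" using out low fixed sstart_pos[of k0] by auto
    thus ?thesis using False by (simp add: bvec_out)
  qed
  moreover have "finsupp n" unfolding finsupp_def n_def by (rule finite_subset[of _ "{k0..<k1}"]) auto
  ultimately show ?thesis by blast
qed

lemma V_apow_affine_near1:
  assumes "e0 \<in> thompsonV"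
  shows "\<exists>q<1. \<exists>A B. \<forall>t. q \<le> t \<and> t < 1 \<longrightarrow> e0 (apow k t) = A * t + B"
proof -
  obtain qe l c where qe: "qe < 1" "\<forall>t. qe \<le> t \<and> t < 1 \<longrightarrow> e0 t = l * t + c"
    using V_affine_near1[OF assms] by blast
  define qp where "qp = pstart (\<bar>2 * k\<bar> + 1)"
  have qp: "qp < 1" "\<forall>t. qp \<le> t \<and> t < 1 \<longrightarrow> apow k t = 1 - pow2 (- 2 * k) * (1 - t)"
    using x0pow_near1[of "2 * k"] pstart_lt1 by (auto simp: apow_x0 qp_def)
  define q where "q = max qp (1 - (1 - qe) / pow2 (- 2 * k))"
  have "e0 (apow k t) = l * pow2 (- 2 * k) * t + (l * (1 - pow2 (- 2 * k)) + c)" if "q \<le> t" "t < 1" for t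
  proof -
    have "1 - t \<le> (1 - qe) / pow2 (- 2 * k)" using that by (simp add: q_def)
    hence "qe \<le> 1 - pow2 (- 2 * k) * (1 - t)" by (simp add: pos_le_divide_eq mult.commute)
    moreover have "1 - pow2 (- 2 * k) * (1 - t) < 1" using that by simp
    ultimately have "e0 (1 - pow2 (- 2 * k) * (1 - t)) = l * (1 - pow2 (- 2 * k) * (1 - t)) + c"
      using qe(2) by blast
    moreover have "apow k t = 1 - pow2 (- 2 * k) * (1 - t)" using qp(2) that by (simp add: q_def)
    ultimately have "e0 (apow k t) = l * (1 - pow2 (- 2 * k) * (1 - t)) + c" by simp
    thus ?thesis by (simp add: algebra_simps)
  qed
  moreover have "q < 1" using qp qe by (simp add: q_def)
  ultimately show ?thesis by blast
qed

lemma commutes_conjugates_in_subgroup: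
  assumes e0V: "e0 \<in> thompsonV" and comm: "\<forall>k t. bconj k (e0 (apow (- m) t)) = e0 (apow (- m) (bconj k t))"
  shows "e0 \<in> gen_by {ela, elb}"
proof -
  define \<beta> where "\<beta> = (\<lambda>t. e0 (apow (- m) t))"
  have germs: "\<forall>p. \<exists>j. rslope \<beta> p j"
  proof
    fix p
    obtain j1 where "rslope (apow (- m)) p j1" using V_rslope[OF apow_V] by blast
    moreover obtain j2 where "rslope e0 (apow (- m) p) j2" using V_rslope[OF e0V] by blast
    ultimately show "\<exists>j. rslope \<beta> p j" unfolding \<beta>_def using rslope_comp by blast
  qed
  obtain q A B where "q < 1" "\<forall>t. q \<le> t \<and> t < 1 \<longrightarrow> \<beta> t = A * t + B"
    using V_apow_affine_near1[OF e0V] unfolding \<beta>_def by blast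
  moreover have "\<forall>t. t < 0 \<or> 1 \<le> t \<longrightarrow> \<beta> t = t"
    using apow_fix V_out[OF e0V] by (auto simp: \<beta>_def)
  ultimately obtain n where n: "finsupp n" "\<beta> = bvec n"
    using commutes_conjugates_in_base_group[OF germs] comm unfolding \<beta>_def by blast
  obtain N where N: "bvec n = bprod N n" using bvec_bprod[OF n(1)] by blast
  have "e0 = gmul (gpow ela m) (bprod N n)"
  proof
    fix t
    have "e0 t = \<beta> (apow m t)" by (simp add: \<beta>_def apow_inv_pt)
    thus "e0 t = gmul (gpow ela m) (bprod N n) t" by (simp add: n(2) N gmul_def apow_def)
  qed
  thus ?thesis by (simp add: gen_mul gpow_gen bprod_gen gen_base)
qed

section \<open>The defining formula\<close>

definition phi_condition :: "(real \<Rightarrow> real) set \<Rightarrow> (real \<Rightarrow> real) \<Rightarrow> bool" where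
  "phi_condition G g \<longleftrightarrow>
    (\<exists>u\<in>G. gmul u ela = gmul ela u \<and>
       (\<forall>v\<in>G. gmul v ela = gmul ela v \<longrightarrow>
          gmul (gmul (ginv (gmul u u)) g) (gmul (gmul (ginv (gmul v v)) elb) (gmul v v))
        = gmul (gmul (gmul (ginv (gmul v v)) elb) (gmul v v)) (gmul (ginv (gmul u u)) g)))"

definition tA :: gterm where "tA = GMul (GPar 0) (GPar 0)"
definition tB :: gterm where "tB = GMul (GMul (GMul (GPar 1) (GInv (GPar 0))) (GInv (GPar 1))) (GPar 0)"
definition tbeta :: gterm where "tbeta = GMul (GInv (GMul (GVar 1) (GVar 1))) (GVar 0)"
definition tC :: gterm where "tC = GMul (GMul (GInv (GMul (GVar 2) (GVar 2))) tB) (GMul (GVar 2) (GVar 2))"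
definition phi :: gform where
  "phi = GEx 1 (GAnd (GEq (GMul (GVar 1) tA) (GMul tA (GVar 1)))
           (GNot (GEx 2 (GAnd (GEq (GMul (GVar 2) tA) (GMul tA (GVar 2)))
                          (GNot (GEq (GMul tbeta tC) (GMul tC tbeta)))))))"
definition pars :: "nat \<Rightarrow> real \<Rightarrow> real" where "pars i = (if i = 1 then x1 else x0)"

lemma sat_phi: "sat G pars e phi \<longleftrightarrow> phi_condition G (e 0)"
  by (simp add: phi_def tA_def tB_def tbeta_def tC_def pars_def ela_def elb_def phi_condition_def)

lemma commutes_ela_iff: "gmul u ela = gmul ela u \<longleftrightarrow> (\<forall>t. u (ela t) = ela (u t))"
  by (auto simp: gmul_def fun_eq_iff)

lemma x0pow_commutes_ela: "gmul (gpow x0 k) ela = gmul ela (gpow x0 k)"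
proof -
  have "ela = gpow x0 2" using apow_x0[of 1] by (simp add: apow_def)
  thus ?thesis using gpow_comm[OF bij_x0, of 2 k] by (simp add: gmul_def)
qed

lemma x0pow_square: "gmul (gpow x0 k) (gpow x0 k) = apow k"
proof -
  have "gpow x0 (2*k) = gpow x0 k \<circ> gpow x0 k" using gpow_add[OF bij_x0, of k k] by (simp only: mult_2)
  thus ?thesis by (simp only: gmul_def apow_x0)
qed

lemma ginv_apow: "ginv (apow k) = apow (- k)" by (simp add: ginv_def inv_apow)

lemma x0pow_conj_elb:
  "gmul (gmul (ginv (gmul (gpow x0 k) (gpow x0 k))) elb) (gmul (gpow x0 k) (gpow x0 k)) = bconj k"
  by (simp only: x0pow_square ginv_apow) (simp add: bconj_def apow_def)

text \<open>In a group G of elements of V containing the powers of x0, the elements commuting with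
  a are exactly the powers of x0, so the condition says that some a^(-m) g commutes with all
  conjugates of b.\<close>
lemma phi_condition_imp_gen:
  assumes GV: "G \<subseteq> thompsonV" and pw: "\<And>k. gpow x0 k \<in> G" and g: "g \<in> G"
    and cond: "phi_condition G g"
  shows "g \<in> gen_by {ela, elb}"
proof -
  obtain u where u: "u \<in> G" "gmul u ela = gmul ela u" and
    h: "\<And>v. v \<in> G \<Longrightarrow> gmul v ela = gmul ela v \<Longrightarrow>
              gmul (gmul (ginv (gmul u u)) g) (gmul (gmul (ginv (gmul v v)) elb) (gmul v v))
            = gmul (gmul (gmul (ginv (gmul v v)) elb) (gmul v v)) (gmul (ginv (gmul u u)) g)"
    using cond unfolding phi_condition_def by blast
  obtain m where m: "u = gpow x0 m" using centraliser_a[of u] u GV commutes_ela_iff by blast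
  have b: "gmul (ginv (gmul u u)) g = (\<lambda>t. g (apow (- m) t))"
    by (simp only: m x0pow_square ginv_apow) (simp add: gmul_def comp_def)
  have "\<forall>k t. bconj k (g (apow (- m) t)) = g (apow (- m) (bconj k t))"
  proof (intro allI)
    fix k t
    have "gmul (\<lambda>t. g (apow (- m) t)) (bconj k) = gmul (bconj k) (\<lambda>t. g (apow (- m) t))"
      using h[OF pw x0pow_commutes_ela, of k] unfolding b x0pow_conj_elb .
    thus "bconj k (g (apow (- m) t)) = g (apow (- m) (bconj k t))" by (simp add: gmul_def fun_eq_iff)
  qed
  moreover have "g \<in> thompsonV" using g GV by blast
  ultimately show ?thesis using commutes_conjugates_in_subgroup by simp
qed

text \<open>... and conversely every element a^m bvec n of the subgroup satisfies it with u = x0^m,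
  because bvec n commutes with all conjugates of b.\<close>
lemma gen_imp_phi_condition:
  assumes GV: "G \<subseteq> thompsonV" and pw: "\<And>k. gpow x0 k \<in> G" and g: "g \<in> gen_by {ela, elb}"
  shows "phi_condition G g"
proof -
  obtain m n where mn: "g = bvec n \<circ> apow m" using gen_wreath_form[OF g] unfolding wreath_form_def by blast
  define u where "u = gpow x0 m"
  have b: "gmul (ginv (gmul u u)) g = bvec n"
    by (simp only: u_def x0pow_square ginv_apow) (rule ext, simp add: gmul_def mn apow_inv_pt)
  have "gmul (gmul (ginv (gmul u u)) g) (gmul (gmul (ginv (gmul v v)) elb) (gmul v v))
      = gmul (gmul (gmul (ginv (gmul v v)) elb) (gmul v v)) (gmul (ginv (gmul u u)) g)"
    if v: "v \<in> G" "gmul v ela = gmul ela v" for v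
  proof -
    obtain k where k: "v = gpow x0 k" using centraliser_a[of v] v GV commutes_ela_iff by blast
    show ?thesis unfolding b k x0pow_conj_elb by (simp add: gmul_def fun_eq_iff bvec_commute_bconj)
  qed
  moreover have "u \<in> G" "gmul u ela = gmul ela u" by (simp_all add: u_def pw x0pow_commutes_ela)
  ultimately show ?thesis unfolding phi_condition_def by (intro bexI[of _ u]) simp_all
qed

text \<open>The first two conjuncts say x0, x1 lie in F; the next three that the
  conjugates of b commute, that the normal form is unique, and that it covers the subgroup
  generated by a and b (so that subgroup is the restricted wreath product); the last that
  phi with parameters x0, x1 defines this subgroup in each of F, T and V.\<close>
theorem proposition3p3:
  shows "x0 \<in> thompsonF \<and> x1 \<in> thompsonF
    \<and> (\<forall>j k. gmul (bconj j) (bconj k) = gmul (bconj k) (bconj j))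
    \<and> (\<forall>N m n. gmul (gpow ela m) (bprod N n) = id \<longrightarrow> m = 0 \<and> (\<forall>k \<in> {- N..N}. n k = 0))
    \<and> (\<forall>g \<in> gen_by {ela, elb}. \<exists>N m n. g = gmul (gpow ela m) (bprod N n))
    \<and> (\<exists>(\<phi>::gform) (ps::nat \<Rightarrow> real \<Rightarrow> real). (\<forall>i. ps i \<in> thompsonF) \<and>
        (\<forall>G \<in> {thompsonF, thompsonT, thompsonV}. \<forall>e. (\<forall>i. e i \<in> G) \<longrightarrow>
            (sat G ps e \<phi> \<longleftrightarrow> e 0 \<in> gen_by {ela, elb})))"
proof (intro conjI allI impI ballI exI[of _ phi] exI[of _ pars])
  fix G and e :: "nat \<Rightarrow> real \<Rightarrow> real"
  assume G: "G \<in> {thompsonF, thompsonT, thompsonV}" and e: "\<forall>i. e i \<in> G"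
  have GV: "G \<subseteq> thompsonV" using G by (auto simp: thompsonF_def thompsonT_def)
  have pw: "gpow x0 k \<in> G" for k using G x0pow_F x0pow_T x0pow_V by auto
  show "sat G pars e phi \<longleftrightarrow> e 0 \<in> gen_by {ela, elb}"
    unfolding sat_phi using phi_condition_imp_gen[OF GV pw] gen_imp_phi_condition[OF GV pw] e by blast
qed (simp_all add: pars_def x0_F x1_F bconj_commute wreath_form_unique gen_normal_form)

end
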